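(* Let $q=2^m$ with $m\ge3$ and $U_0=\{\alpha\in\mathbb{F}_q:\mathrm{Tr}(\alpha^5)=0\}$. Then for all integers $s,r$ with $1\le s\le|U_0|$ and $1\le r\le s-2$, there exists a $1$-dim hull code over $\mathbb{F}_q$ with parameters $[2s+1,2(r+1),\ge2(s-r-1)]$ whose dual has parameters $[2s+1,2(s-r)-1,\ge2r+1]$.
   Context: $\mathrm{Tr}$ denotes the absolute trace from $\mathbb{F}_{2^m}$ to $\mathbb{F}_2$. $[n,k,\ge d]$ denotes a linear code of length $n$, dimension $k$ and minimum distance at least $d$. The hull of a linear code $C$ is $C\cap C^\perp$ (Euclidean dual), and $C$ is a $1$-dim hull code if $\dim(C\cap C^\perp)=1$. *)

theory Defs
  imports Complex_Main "HOL-Library.Function_Algebras"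
begin

text \<open>Absolute trace from GF(2^m) to GF(2), as a map into the field itself
  (its values lie in the prime field {0,1}).\<close>
definition abs_trace :: "nat \<Rightarrow> 'a::field \<Rightarrow> 'a" where
  "abs_trace m x = (\<Sum>i<m. x ^ (2 ^ i))"

text \<open>Vectors of length n over a field F are modelled as functions nat \<Rightarrow> F
  vanishing outside {0..<n}.  Componentwise scalar multiplication:\<close>
definition vscale :: "'a::field \<Rightarrow> (nat \<Rightarrow> 'a) \<Rightarrow> (nat \<Rightarrow> 'a)" where
  "vscale c v = (\<lambda>i. c * v i)"

global_interpretation fvec: vector_space "vscale :: 'a::field \<Rightarrow> (nat \<Rightarrow> 'a) \<Rightarrow> _"
  by unfold_locales (auto simp: vscale_def fun_eq_iff algebra_simps)

definition ambient :: "nat \<Rightarrow> (nat \<Rightarrow> 'a::zero) set" where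
  "ambient n = {v. \<forall>i\<ge>n. v i = 0}"

definition linear_code :: "nat \<Rightarrow> (nat \<Rightarrow> 'a::field) set \<Rightarrow> bool" where
  "linear_code n C \<longleftrightarrow> C \<subseteq> ambient n \<and> fvec.subspace C"

definition inner_prod :: "nat \<Rightarrow> (nat \<Rightarrow> 'a::field) \<Rightarrow> (nat \<Rightarrow> 'a) \<Rightarrow> 'a" where
  "inner_prod n u v = (\<Sum>i<n. u i * v i)"

definition dual_code :: "nat \<Rightarrow> (nat \<Rightarrow> 'a::field) set \<Rightarrow> (nat \<Rightarrow> 'a) set" where
  "dual_code n C = {v \<in> ambient n. \<forall>c\<in>C. inner_prod n v c = 0}"

definition code_hull :: "nat \<Rightarrow> (nat \<Rightarrow> 'a::field) set \<Rightarrow> (nat \<Rightarrow> 'a) set" where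
  "code_hull n C = C \<inter> dual_code n C"

definition hweight :: "nat \<Rightarrow> (nat \<Rightarrow> 'a::zero) \<Rightarrow> nat" where
  "hweight n v = card {i. i < n \<and> v i \<noteq> 0}"

definition min_dist_ge :: "nat \<Rightarrow> (nat \<Rightarrow> 'a::field) set \<Rightarrow> nat \<Rightarrow> bool" where
  "min_dist_ge n C d \<longleftrightarrow> (\<forall>c\<in>C. c \<noteq> 0 \<longrightarrow> hweight n c \<ge> d)"

definition code_params :: "(nat \<Rightarrow> 'a::field) set \<Rightarrow> nat \<Rightarrow> nat \<Rightarrow> nat \<Rightarrow> bool" where
  "code_params C n k d \<longleftrightarrow> linear_code n C \<and> fvec.dim C = k \<and> min_dist_ge n C d"

end

(* The code lives on the curve y^2 + y = x^5 over F_q.  By Artin-Schreier, every a with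
   Tr(a^5) = 0 is the x-coordinate of two points (a, b) and (a, b + 1), so s such values give
   2s points.  Evaluating the functions A(x) + B(x) y with deg A <= r + 1 and deg B <= r - 1
   there, plus one extra coordinate holding the coefficient of x^(r-1) y, gives a code of
   dimension 2r + 2; a nonzero codeword vanishes at most at deg(A^2 + AB + B^2 x^5) points, the
   norm bounding the zeros fiber by fiber.  Its dual is the analogous code weighted by the
   Lagrange coefficients of the x-coordinates.
   Scaling coordinate i by c_i turns the hull into the radical of the form with weights c_i^2,
   and in characteristic 2 every weight is a square.  Moving the weights one coordinate at a
   time from weights with trivial radical to the Lagrange weights, whose radical contains the
   all-one word, changes the dimension of the radical by at most one at each step, so some
   weights give a radical of dimension exactly one. *)

theory Submission
  imports Defs "HOL-Computational_Algebra.Polynomial" "HOL-Computational_Algebra.Primes"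
begin

section \<open>Subspaces of coordinate space\<close>

lemma sum_fun_apply: "(\<Sum>i\<in>A. (f i :: 'b \<Rightarrow> 'c::comm_monoid_add)) x = (\<Sum>i\<in>A. f i x)"
  by (induction A rule: infinite_finite_induct) auto

interpretation fvp: vector_space_pair "vscale :: 'a::field \<Rightarrow> (nat \<Rightarrow> 'a) \<Rightarrow> _" vscale
  by unfold_locales

definition unit_vec :: "nat \<Rightarrow> nat \<Rightarrow> 'a::field" where
  "unit_vec i = (\<lambda>j. if j = i then 1 else 0)"

lemma in_span_unit_vecs:
  assumes "finite K" "\<And>i. i \<notin> K \<Longrightarrow> (v::nat \<Rightarrow> 'a::field) i = 0"
  shows "v \<in> fvec.span (unit_vec ` K)"
proof -
  have "v = (\<Sum>i\<in>K. vscale (v i) (unit_vec i))"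
  proof
    fix j
    have "(\<Sum>i\<in>K. vscale (v i) (unit_vec i)) j = (\<Sum>i\<in>K. if i = j then v i else 0)"
      unfolding sum_fun_apply by (intro sum.cong) (auto simp: vscale_def unit_vec_def)
    then show "v j = (\<Sum>i\<in>K. vscale (v i) (unit_vec i)) j"
      using assms by (cases "j \<in> K") auto
  qed
  also have "\<dots> \<in> fvec.span (unit_vec ` K)"
    by (intro fvec.span_sum fvec.span_scale fvec.span_base) auto
  finally show ?thesis .
qed

lemma ambient_subset_span_unit_vecs:
  "ambient n \<subseteq> fvec.span (unit_vec ` {..<n} :: (nat \<Rightarrow> 'a::field) set)"
  unfolding ambient_def by (intro subsetI in_span_unit_vecs) (auto simp: not_less)

lemma ambient_basis_exists:
  assumes "V \<subseteq> ambient n"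
  obtains B :: "(nat \<Rightarrow> 'a::field) set"
  where "B \<subseteq> V" "fvec.independent B" "V \<subseteq> fvec.span B" "card B = fvec.dim V" "finite B"
proof -
  obtain B where B: "B \<subseteq> V" "fvec.independent B" "V \<subseteq> fvec.span B" "card B = fvec.dim V"
    using fvec.basis_exists by blast
  have "B \<subseteq> fvec.span (unit_vec ` {..<n})"
    using B(1) assms ambient_subset_span_unit_vecs by blast
  then have "finite B"
    using fvec.independent_span_bound[OF _ B(2)] by blast
  with B that show ?thesis by blast
qed

lemma independent_card_le_dim_ambient:
  assumes "fvec.independent I" "I \<subseteq> V" "V \<subseteq> ambient n"
  shows "card I \<le> fvec.dim (V :: (nat \<Rightarrow> 'a::field) set)"
proof -
  obtain B where B: "B \<subseteq> V" "fvec.independent B" "V \<subseteq> fvec.span B"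
    "card B = fvec.dim V" "finite B"
    using ambient_basis_exists[OF assms(3)] by blast
  have "I \<subseteq> fvec.span B"
    using assms(2) B(3) by blast
  then show ?thesis
    using fvec.independent_span_bound[OF B(5) assms(1)] B(4) by simp
qed

lemma dim_mono_ambient:
  assumes "V \<subseteq> W" "W \<subseteq> ambient n"
  shows "fvec.dim V \<le> fvec.dim (W :: (nat \<Rightarrow> 'a::field) set)"
proof -
  obtain B where B: "B \<subseteq> V" "fvec.independent B" "V \<subseteq> fvec.span B"
    "card B = fvec.dim V" "finite B"
    using ambient_basis_exists[of V n] assms by blast
  have "card B \<le> fvec.dim W"
    using independent_card_le_dim_ambient[OF B(2) _ assms(2)] B(1) assms(1) by blast
  then show ?thesis using B(4) by simp
qed

lemma one_le_dim_ambient: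
  assumes "x \<in> V" "x \<noteq> 0" "V \<subseteq> ambient n"
  shows "1 \<le> fvec.dim (V :: (nat \<Rightarrow> 'a::field) set)"
proof -
  have "fvec.independent {x}" using assms(2) by simp
  then show ?thesis
    using independent_card_le_dim_ambient[of "{x}" V n] assms by simp
qed

lemma dim_zero_subspace: "fvec.dim ({0} :: (nat \<Rightarrow> 'a::field) set) = 0"
  using fvec.dim_le_card[of "{0::nat \<Rightarrow> 'a}" "{}"] by simp

lemma dim_le_dim_coordinate_kernel_Suc:
  assumes "fvec.subspace V" "V \<subseteq> ambient n"
  shows "fvec.dim V \<le> fvec.dim {v \<in> V. v P = (0::'a::field)} + 1"
proof (cases "\<exists>u\<in>V. u P \<noteq> 0")
  case False
  then have "{v \<in> V. v P = 0} = V" by auto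
  then show ?thesis by simp
next
  case True
  then obtain u where u: "u \<in> V" "u P \<noteq> 0" by blast
  let ?W = "{v \<in> V. v P = 0}"
  obtain B where B: "B \<subseteq> ?W" "fvec.independent B" "?W \<subseteq> fvec.span B"
    "card B = fvec.dim ?W" "finite B"
    using ambient_basis_exists[of ?W n] assms by blast
  have "V \<subseteq> fvec.span (insert u B)"
  proof
    fix x assume x: "x \<in> V"
    let ?y = "x - vscale (x P / u P) u"
    have "?y \<in> V"
      using x u assms(1) by (intro fvec.subspace_diff fvec.subspace_scale) auto
    moreover have "?y P = 0"
      using u by (simp add: vscale_def)
    ultimately have "?y \<in> fvec.span B"
      using B(3) by blast
    then have "?y \<in> fvec.span (insert u B)"
      by (meson fvec.span_mono subset_insertI subsetD)
    moreover have "vscale (x P / u P) u \<in> fvec.span (insert u B)"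
      by (intro fvec.span_scale fvec.span_base) simp
    ultimately have "?y + vscale (x P / u P) u \<in> fvec.span (insert u B)"
      by (rule fvec.span_add)
    then show "x \<in> fvec.span (insert u B)" by simp
  qed
  then have "fvec.dim V \<le> card (insert u B)"
    using fvec.dim_le_card B(5) by blast
  also have "\<dots> \<le> card B + 1"
    using B(5) by (simp add: card_insert_if)
  finally show ?thesis using B(4) by simp
qed

lemma dim_le_card_determining_coordinates:
  assumes "fvec.subspace V" "finite K"
    and "\<And>v. v \<in> V \<Longrightarrow> \<forall>i\<in>K. v i = 0 \<Longrightarrow> v = 0"
  shows "fvec.dim (V :: (nat \<Rightarrow> 'a::field) set) \<le> card K"
proof -
  define restr where "restr v = (\<lambda>i. if i \<in> K then v i else (0::'a))" for v
  have lin: "Vector_Spaces.linear vscale vscale restr"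
    unfolding Vector_Spaces.linear_iff restr_def
    by (auto simp: fvec.vector_space_axioms vscale_def fun_eq_iff)
  obtain B where B: "B \<subseteq> V" "fvec.independent B" "V \<subseteq> fvec.span B" "card B = fvec.dim V"
    using fvec.basis_exists by blast
  have inj: "inj_on restr V"
  proof (rule inj_onI)
    fix x y assume xy: "x \<in> V" "y \<in> V" "restr x = restr y"
    have "x - y \<in> V"
      using xy(1,2) assms(1) by (simp add: fvec.subspace_diff)
    moreover have "\<forall>i\<in>K. (x - y) i = 0"
    proof
      fix i assume "i \<in> K"
      then show "(x - y) i = 0"
        using fun_cong[OF xy(3), of i] by (simp add: restr_def)
    qed
    ultimately have "x - y = 0" using assms(3) by blast
    then show "x = y" by simp
  qed
  have "fvec.span B \<subseteq> V"
    using B(1) assms(1) by (simp add: fvec.span_minimal)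
  then have "inj_on restr (fvec.span B)"
    using inj inj_on_subset by blast
  then have ind: "fvec.independent (restr ` B)"
    using fvp.linear_independent_injective_image[OF lin B(2)] by blast
  have "restr ` B \<subseteq> fvec.span (unit_vec ` K)"
  proof (rule image_subsetI)
    fix v show "restr v \<in> fvec.span (unit_vec ` K)"
      unfolding restr_def by (rule in_span_unit_vecs[OF assms(2)]) simp
  qed
  then have "card (restr ` B) \<le> card (unit_vec ` K :: (nat \<Rightarrow> 'a) set)"
    using fvec.independent_span_bound[OF finite_imageI[OF assms(2)] ind] by simp
  also have "\<dots> \<le> card K"
    using assms(2) card_image_le by blast
  moreover have "card (restr ` B) = card B"
    by (rule card_image[OF inj_on_subset[OF inj B(1)]])
  ultimately show ?thesis using B(4) by simp
qed

lemma dim_linear_image_inj: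
  assumes lin: "Vector_Spaces.linear vscale vscale f" and inj: "inj_on f V"
    and sub: "fvec.subspace V"
  shows "fvec.dim (f ` V) = fvec.dim (V :: (nat \<Rightarrow> 'a::field) set)"
proof -
  obtain B where B: "B \<subseteq> V" "fvec.independent B" "V \<subseteq> fvec.span B" "card B = fvec.dim V"
    using fvec.basis_exists by blast
  have "fvec.span B \<subseteq> V"
    using B(1) sub by (simp add: fvec.span_minimal)
  then have "inj_on f (fvec.span B)"
    using inj inj_on_subset by blast
  then have ind: "fvec.independent (f ` B)"
    using fvp.linear_independent_injective_image[OF lin B(2)] by blast
  have "f ` V \<subseteq> fvec.span (f ` B)"
    using B(3) fvp.linear_span_image[OF lin, of B] by blast
  moreover have "f ` B \<subseteq> f ` V"
    using B(1) by blast
  ultimately have "card (f ` B) = fvec.dim (f ` V)"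
    using fvec.basis_card_eq_dim[OF _ _ ind] by blast
  moreover have "card (f ` B) = card B"
    by (rule card_image[OF inj_on_subset[OF inj B(1)]])
  ultimately show ?thesis using B(4) by simp
qed

lemma dual_code_subspace: "fvec.subspace (dual_code n C)"
  unfolding fvec.subspace_def dual_code_def ambient_def inner_prod_def
  by (auto simp: vscale_def sum.distrib algebra_simps sum_distrib_left[symmetric])

lemma dual_code_subset_ambient: "dual_code n C \<subseteq> ambient n"
  unfolding dual_code_def by auto

section \<open>Triangular families\<close>

lemma lower_triangular_solution_eq_0:
  fixes M :: "nat \<Rightarrow> nat \<Rightarrow> 'a::idom"
  assumes upper: "\<And>i j. i < j \<Longrightarrow> j < k \<Longrightarrow> M i j = 0"
    and diag: "\<And>j. j < k \<Longrightarrow> M j j \<noteq> 0"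
    and eq: "\<And>i. i < k \<Longrightarrow> (\<Sum>j<k. M i j * f j) = 0"
    and "j < k"
  shows "f j = 0"
proof (rule ccontr)
  assume "f j \<noteq> 0"
  define j0 where "j0 = (LEAST j. j < k \<and> f j \<noteq> 0)"
  have j0: "j0 < k" "f j0 \<noteq> 0"
    using LeastI[of "\<lambda>j. j < k \<and> f j \<noteq> 0"] \<open>f j \<noteq> 0\<close> \<open>j < k\<close> unfolding j0_def by blast+
  have below: "f i = 0" if "i < j0" for i
    using not_less_Least[of i "\<lambda>j. j < k \<and> f j \<noteq> 0"] that j0(1) unfolding j0_def by auto
  have "(\<Sum>j<k. M j0 j * f j) = (\<Sum>j\<in>{j0}. M j0 j * f j)"
    by (rule sum.mono_neutral_right) (use j0(1) below upper in \<open>auto simp: neq_iff\<close>)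
  then show False using eq[OF j0(1)] diag[OF j0(1)] j0(2) by simp
qed

lemma upper_triangular_solution_eq_0:
  fixes M :: "nat \<Rightarrow> nat \<Rightarrow> 'a::idom"
  assumes lower: "\<And>i j. i < j \<Longrightarrow> j < k \<Longrightarrow> M j i = 0"
    and diag: "\<And>j. j < k \<Longrightarrow> M j j \<noteq> 0"
    and eq: "\<And>i. i < k \<Longrightarrow> (\<Sum>j<k. M i j * f j) = 0"
    and "j < k"
  shows "f j = 0"
proof (rule ccontr)
  assume "f j \<noteq> 0"
  define S where "S = {j. j < k \<and> f j \<noteq> 0}"
  have S: "finite S" "j \<in> S"
    using \<open>f j \<noteq> 0\<close> \<open>j < k\<close> unfolding S_def by auto
  define j0 where "j0 = Max S"
  have "j0 \<in> S"
    unfolding j0_def using Max_in[OF S(1)] S(2) by blast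
  then have j0: "j0 < k" "f j0 \<noteq> 0"
    unfolding S_def by auto
  have above: "f i = 0" if "j0 < i" "i < k" for i
  proof (rule ccontr)
    assume "f i \<noteq> 0"
    with that have "i \<in> S" unfolding S_def by simp
    then have "i \<le> j0" unfolding j0_def using Max_ge[OF S(1)] by blast
    with that show False by simp
  qed
  have "(\<Sum>j<k. M j0 j * f j) = (\<Sum>j\<in>{j0}. M j0 j * f j)"
    by (rule sum.mono_neutral_right) (use j0(1) above lower in \<open>auto simp: neq_iff\<close>)
  then show False using eq[OF j0(1)] diag[OF j0(1)] j0(2) by simp
qed

locale triangular_family =
  fixes c :: "nat \<Rightarrow> nat \<Rightarrow> 'a::field" and p :: "nat \<Rightarrow> nat" and k :: nat
  assumes vanish: "\<And>i j. i < j \<Longrightarrow> j < k \<Longrightarrow> c j (p i) = 0"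
    and pivot: "\<And>j. j < k \<Longrightarrow> c j (p j) \<noteq> 0"
begin

lemma inj_on_family: "inj_on c {..<k}"
proof (rule inj_onI)
  fix i j assume ij: "i \<in> {..<k}" "j \<in> {..<k}" "c i = c j"
  show "i = j"
  proof (rule ccontr)
    assume "i \<noteq> j"
    then show False
      using ij vanish pivot by (cases i j rule: linorder_cases) (metis lessThan_iff)+
  qed
qed

lemma card_family: "card (c ` {..<k}) = k"
  using inj_on_family by (simp add: card_image)

lemma independent_family: "fvec.independent (c ` {..<k})"
proof (rule fvec.independent_if_scalars_zero)
  fix f x assume sum0: "(\<Sum>x\<in>c ` {..<k}. vscale (f x) x) = 0" and x: "x \<in> c ` {..<k}"
  have rows: "(\<Sum>j<k. c j (p i) * (f \<circ> c) j) = 0" for i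
  proof -
    have "(\<Sum>j<k. vscale (f (c j)) (c j)) = 0"
      using sum0 by (simp add: sum.reindex[OF inj_on_family])
    then have "(\<Sum>j<k. vscale (f (c j)) (c j)) (p i) = 0"
      by simp
    then show ?thesis
      by (simp add: sum_fun_apply vscale_def mult.commute)
  qed
  have "(f \<circ> c) j = 0" if "j < k" for j
    by (rule lower_triangular_solution_eq_0[of k "\<lambda>i j. c j (p i)"]) (use vanish pivot rows that in auto)
  then show "f x = 0" using x by auto
qed simp

lemma orthogonal_family_eq_0:
  assumes injp: "inj_on p {..<k}" and pn: "p ` {..<k} \<subseteq> {..<n}"
    and supp: "\<And>i. i \<notin> p ` {..<k} \<Longrightarrow> v i = 0"
    and orth: "\<And>j. j < k \<Longrightarrow> (\<Sum>i<n. v i * c j i) = 0"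
  shows "v = 0"
proof -
  have rows: "(\<Sum>i<k. c j (p i) * (v \<circ> p) i) = 0" if "j < k" for j
  proof -
    have "(\<Sum>i<n. v i * c j i) = (\<Sum>i\<in>p ` {..<k}. v i * c j i)"
      by (rule sum.mono_neutral_right) (use pn supp in auto)
    also have "\<dots> = (\<Sum>i<k. c j (p i) * v (p i))"
      by (simp add: sum.reindex[OF injp] mult.commute)
    finally show ?thesis using orth[OF that] by simp
  qed
  have "(v \<circ> p) j = 0" if "j < k" for j
    by (rule upper_triangular_solution_eq_0[of k "\<lambda>j i. c j (p i)"]) (use vanish pivot rows that in auto)
  then have "v i = 0" for i
    using supp by (cases "i \<in> p ` {..<k}") auto
  then show ?thesis by (simp add: fun_eq_iff)
qed

end

section \<open>Weighted radicals\<close>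

definition weighted_inner :: "nat \<Rightarrow> (nat \<Rightarrow> 'a::field) \<Rightarrow> (nat \<Rightarrow> 'a) \<Rightarrow> (nat \<Rightarrow> 'a) \<Rightarrow> 'a" where
  "weighted_inner n \<gamma> x y = (\<Sum>i<n. \<gamma> i * x i * y i)"

definition weighted_radical :: "nat \<Rightarrow> (nat \<Rightarrow> 'a::field) set \<Rightarrow> (nat \<Rightarrow> 'a) \<Rightarrow> (nat \<Rightarrow> 'a) set" where
  "weighted_radical n C \<gamma> = {x \<in> C. \<forall>y\<in>C. weighted_inner n \<gamma> x y = 0}"

lemma weighted_inner_add: "weighted_inner n \<gamma> (x + x') y = weighted_inner n \<gamma> x y + weighted_inner n \<gamma> x' y"
  unfolding weighted_inner_def by (simp add: sum.distrib algebra_simps)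

lemma weighted_inner_scale: "weighted_inner n \<gamma> (vscale c x) y = c * weighted_inner n \<gamma> x y"
  unfolding weighted_inner_def by (simp add: sum_distrib_left vscale_def algebra_simps)

lemma weighted_inner_diff: "weighted_inner n \<gamma> (x - x') y = weighted_inner n \<gamma> x y - weighted_inner n \<gamma> x' y"
  unfolding weighted_inner_def by (simp add: sum_subtractf algebra_simps)

lemma weighted_inner_fun_upd:
  assumes "P < n"
  shows "weighted_inner n (\<gamma>(P := t)) x y = weighted_inner n \<gamma> x y + (t - \<gamma> P) * x P * y P"
proof -
  have split: "(\<Sum>i<n. g i) = g P + (\<Sum>i\<in>{..<n}-{P}. g i)" for g :: "nat \<Rightarrow> 'a"
    using assms by (simp add: sum.remove)
  show ?thesis unfolding weighted_inner_def
    by (subst (1 2) split) (auto simp: algebra_simps intro!: sum.cong)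
qed

lemma weighted_inner_fun_upd_zero:
  "x P = 0 \<Longrightarrow> weighted_inner n (\<gamma>(P := t)) x y = weighted_inner n \<gamma> x y"
  unfolding weighted_inner_def by (intro sum.cong) auto

lemma weighted_radical_cong:
  "(\<And>i. i < n \<Longrightarrow> \<gamma> i = \<gamma>' i) \<Longrightarrow> weighted_radical n C \<gamma> = weighted_radical n C \<gamma>'"
  unfolding weighted_radical_def weighted_inner_def by simp

lemma weighted_radical_subset: "weighted_radical n C \<gamma> \<subseteq> C"
  unfolding weighted_radical_def by auto

lemma subspace_weighted_radical:
  assumes "fvec.subspace C"
  shows "fvec.subspace (weighted_radical n C \<gamma>)"
  unfolding fvec.subspace_def
proof (intro conjI ballI allI)
  show "0 \<in> weighted_radical n C \<gamma>"
    using assms unfolding weighted_radical_def weighted_inner_def by (auto simp: fvec.subspace_0)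
next
  fix x x' assume "x \<in> weighted_radical n C \<gamma>" "x' \<in> weighted_radical n C \<gamma>"
  then show "x + x' \<in> weighted_radical n C \<gamma>"
    using assms unfolding weighted_radical_def by (auto simp: weighted_inner_add fvec.subspace_add)
next
  fix c x assume "x \<in> weighted_radical n C \<gamma>"
  then show "vscale c x \<in> weighted_radical n C \<gamma>"
    using assms unfolding weighted_radical_def by (auto simp: weighted_inner_scale fvec.subspace_scale)
qed

lemma dim_weighted_radical_fun_upd_le:
  assumes "fvec.subspace C" "C \<subseteq> ambient n"
  shows "fvec.dim (weighted_radical n C (\<gamma>(P := t))) \<le> fvec.dim (weighted_radical n C \<gamma>) + 1"
proof -
  let ?R = "weighted_radical n C (\<gamma>(P := t))"
  have "fvec.dim ?R \<le> fvec.dim {v \<in> ?R. v P = 0} + 1"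
    using assms by (intro dim_le_dim_coordinate_kernel_Suc subspace_weighted_radical)
      (auto dest: subsetD[OF weighted_radical_subset])
  also have "fvec.dim {v \<in> ?R. v P = 0} \<le> fvec.dim (weighted_radical n C \<gamma>)"
  proof (rule dim_mono_ambient)
    show "{v \<in> ?R. v P = 0} \<subseteq> weighted_radical n C \<gamma>"
      unfolding weighted_radical_def by (auto simp: weighted_inner_fun_upd_zero)
    show "weighted_radical n C \<gamma> \<subseteq> ambient n"
      using assms(2) weighted_radical_subset by blast
  qed
  finally show ?thesis by simp
qed

context
  fixes n :: nat and C :: "(nat \<Rightarrow> 'a::field) set" and \<gamma> :: "nat \<Rightarrow> 'a" and P :: nat
  assumes trivial: "weighted_radical n C \<gamma> = {0}" and P: "P < n"
begin

lemma weighted_radical_fun_upd_nonzero: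
  assumes x: "x \<in> weighted_radical n C (\<gamma>(P := t))" "x \<noteq> 0"
  shows "x P \<noteq> 0" "\<gamma> P \<noteq> t"
    and "\<And>y. y \<in> C \<Longrightarrow> weighted_inner n \<gamma> x y = (\<gamma> P - t) * x P * y P"
proof -
  have xC: "x \<in> C" and orth: "\<And>y. y \<in> C \<Longrightarrow> weighted_inner n (\<gamma>(P := t)) x y = 0"
    using x(1) unfolding weighted_radical_def by auto
  show eq: "weighted_inner n \<gamma> x y = (\<gamma> P - t) * x P * y P" if "y \<in> C" for y
    using orth[OF that] weighted_inner_fun_upd[OF P, of \<gamma> t x y] by (simp add: algebra_simps)
  have "\<not> (x P = 0 \<or> \<gamma> P = t)"
  proof
    assume "x P = 0 \<or> \<gamma> P = t"
    then have "x \<in> weighted_radical n C \<gamma>"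
      using xC eq unfolding weighted_radical_def by auto
    with trivial x(2) show False by blast
  qed
  then show "x P \<noteq> 0" "\<gamma> P \<noteq> t" by auto
qed

text \<open>If both updates had nonzero radical elements \<open>x\<^sub>1, x\<^sub>2\<close>, a combination of them
  would lie in the radical for \<open>\<gamma>\<close>, and its \<open>P\<close>-coordinate would be
  \<open>1/(\<gamma> P - t\<^sub>1) - 1/(\<gamma> P - t\<^sub>2) \<noteq> 0\<close>.\<close>

lemma weighted_radical_fun_upd_trivial:
  assumes C: "fvec.subspace C" and t: "t1 \<noteq> t2"
  shows "weighted_radical n C (\<gamma>(P := t1)) = {0} \<or> weighted_radical n C (\<gamma>(P := t2)) = {0}"
proof (rule ccontr)
  have "0 \<in> weighted_radical n C \<gamma>'" for \<gamma>'
    using subspace_weighted_radical[OF C] fvec.subspace_0 by blast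
  moreover assume "\<not> ?thesis"
  ultimately obtain x1 x2 where
    x1: "x1 \<in> weighted_radical n C (\<gamma>(P := t1))" "x1 \<noteq> 0" and
    x2: "x2 \<in> weighted_radical n C (\<gamma>(P := t2))" "x2 \<noteq> 0"
    by blast
  note w1 = weighted_radical_fun_upd_nonzero[OF x1] and w2 = weighted_radical_fun_upd_nonzero[OF x2]
  define a1 where "a1 = inverse ((\<gamma> P - t1) * x1 P)"
  define a2 where "a2 = inverse ((\<gamma> P - t2) * x2 P)"
  define z where "z = vscale a1 x1 - vscale a2 x2"
  have "x1 \<in> C" "x2 \<in> C"
    using x1 x2 weighted_radical_subset by blast+
  then have zC: "z \<in> C"
    unfolding z_def using C by (intro fvec.subspace_diff fvec.subspace_scale)
  have e1: "a1 * ((\<gamma> P - t1) * x1 P) = 1"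
    unfolding a1_def by (rule left_inverse) (use w1 in simp)
  have e2: "a2 * ((\<gamma> P - t2) * x2 P) = 1"
    unfolding a2_def by (rule left_inverse) (use w2 in simp)
  have "weighted_inner n \<gamma> z y = 0" if "y \<in> C" for y
    unfolding z_def weighted_inner_diff weighted_inner_scale w1(3)[OF that] w2(3)[OF that]
    using e1 e2 by (simp flip: mult.assoc)
  with zC have "z \<in> weighted_radical n C \<gamma>"
    unfolding weighted_radical_def by blast
  then have "z P = 0"
    using trivial by simp
  then have "a1 * x1 P = a2 * x2 P"
    by (simp add: z_def vscale_def)
  moreover have "a1 * x1 P = inverse (\<gamma> P - t1)" "a2 * x2 P = inverse (\<gamma> P - t2)"
    using w1(1) w2(1) by (simp_all add: a1_def a2_def mult.assoc)
  ultimately have "inverse (\<gamma> P - t1) = inverse (\<gamma> P - t2)"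
    by simp
  then show False
    using t by simp
qed

end

lemma exists_nonvanishing_weights_trivial_radical:
  fixes C :: "(nat \<Rightarrow> 'a::field) set"
  assumes C: "fvec.subspace C" and trivial: "weighted_radical n C \<gamma>0 = {0}"
    and three: "\<exists>a b :: 'a. a \<noteq> 0 \<and> b \<noteq> 0 \<and> a \<noteq> b"
  shows "\<exists>\<gamma>. (\<forall>i<n. \<gamma> i \<noteq> 0) \<and> weighted_radical n C \<gamma> = {0}"
proof -
  obtain a b :: 'a where ab: "a \<noteq> 0" "b \<noteq> 0" "a \<noteq> b"
    using three by blast
  have "\<exists>\<gamma>. (\<forall>i<min j n. \<gamma> i \<noteq> 0) \<and> weighted_radical n C \<gamma> = {0}" for j
  proof (induction j)
    case 0
    show ?case by (rule exI[of _ \<gamma>0]) (simp add: trivial zero_fun_def)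
  next
    case (Suc j)
    then obtain \<gamma> where \<gamma>: "\<forall>i<min j n. \<gamma> i \<noteq> 0" "weighted_radical n C \<gamma> = {0}"
      by blast
    show ?case
    proof (cases "j < n")
      case True
      obtain t where t: "t \<in> {a, b}" "weighted_radical n C (\<gamma>(j := t)) = {0}"
        using weighted_radical_fun_upd_trivial[OF \<gamma>(2) True C ab(3)] by blast
      show ?thesis
      proof (intro exI[of _ "\<gamma>(j := t)"] conjI)
        show "\<forall>i<min (Suc j) n. (\<gamma>(j := t)) i \<noteq> 0"
          using \<gamma>(1) t(1) ab True by (auto simp: less_Suc_eq)
      qed (rule t(2))
    next
      case False
      then have "min (Suc j) n = min j n" by simp
      then show ?thesis using \<gamma> by metis
    qed
  qed
  from this[of n] show ?thesis by simp
qed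

lemma exists_eq_1_if_unit_steps:
  fixes D :: "nat \<Rightarrow> nat"
  assumes "D 0 = 0" "1 \<le> D n" "\<And>j. D (Suc j) \<le> D j + 1"
  shows "\<exists>j. D j = 1"
  using assms(2)
proof (induction n)
  case (Suc n)
  show ?case
  proof (cases "1 \<le> D n")
    case True
    then show ?thesis by (rule Suc.IH)
  next
    case False
    then have "D (Suc n) = 1"
      using Suc.prems assms(3)[of n] by simp
    then show ?thesis by blast
  qed
qed (use assms(1) in simp)

text \<open>Switch the weights from \<open>\<gamma>a\<close> to \<open>\<gamma>b\<close> one coordinate at a time: the dimension of the
  radical starts at \<open>0\<close>, ends positive, and rises by at most one per step.\<close>

lemma exists_nonvanishing_weights_radical_dim_1:
  assumes C: "fvec.subspace C" "C \<subseteq> ambient n"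
    and a: "\<forall>i<n. \<gamma>a i \<noteq> 0" "weighted_radical n C \<gamma>a = {0}"
    and b: "\<forall>i<n. \<gamma>b i \<noteq> 0" "x \<in> weighted_radical n C \<gamma>b" "x \<noteq> 0"
  shows "\<exists>\<gamma>. (\<forall>i<n. \<gamma> i \<noteq> 0) \<and> fvec.dim (weighted_radical n C \<gamma>) = 1"
proof -
  define g where "g j = (\<lambda>i. if i < j then \<gamma>b i else \<gamma>a i)" for j
  define D where "D j = fvec.dim (weighted_radical n C (g j))" for j
  have "D 0 = 0"
    using a(2) dim_zero_subspace by (simp add: D_def g_def)
  moreover have "weighted_radical n C (g n) = weighted_radical n C \<gamma>b"
    by (rule weighted_radical_cong) (simp add: g_def)
  then have "1 \<le> D n"
    unfolding D_def
    using one_le_dim_ambient[OF b(2,3) subset_trans[OF weighted_radical_subset C(2)]] by simp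
  moreover have "g (Suc j) = (g j)(j := \<gamma>b j)" for j
    unfolding g_def by (auto simp: fun_eq_iff)
  then have "D (Suc j) \<le> D j + 1" for j
    unfolding D_def using dim_weighted_radical_fun_upd_le[OF C] by simp
  ultimately obtain j where "D j = 1"
    using exists_eq_1_if_unit_steps by blast
  moreover have "\<forall>i<n. g j i \<noteq> 0"
    using a(1) b(1) by (simp add: g_def)
  ultimately show ?thesis
    unfolding D_def by blast
qed

section \<open>Coordinate scaling\<close>

definition coord_scale :: "(nat \<Rightarrow> 'a::field) \<Rightarrow> (nat \<Rightarrow> 'a) \<Rightarrow> nat \<Rightarrow> 'a" where
  "coord_scale c x = (\<lambda>i. c i * x i)"

lemma linear_coord_scale: "Vector_Spaces.linear vscale vscale (coord_scale c)"
  unfolding Vector_Spaces.linear_iff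
  by (auto simp: fvec.vector_space_axioms vscale_def coord_scale_def fun_eq_iff algebra_simps)

lemma coord_scale_ambient: "x \<in> ambient n \<Longrightarrow> coord_scale c x \<in> ambient n"
  unfolding ambient_def coord_scale_def by auto

context
  fixes c :: "nat \<Rightarrow> 'a::field"
  assumes nonzero: "\<And>i. c i \<noteq> 0"
begin

lemma coord_scale_inverse: "coord_scale (\<lambda>i. inverse (c i)) (coord_scale c x) = x"
  unfolding coord_scale_def using nonzero by (simp add: fun_eq_iff)

lemma inj_coord_scale: "inj (coord_scale c)"
  by (metis injI coord_scale_inverse)

lemma hweight_coord_scale: "hweight n (coord_scale c x) = hweight n x"
  unfolding hweight_def coord_scale_def using nonzero by simp

lemma code_params_coord_scale:
  assumes "code_params C n k d"
  shows "code_params (coord_scale c ` C) n k d"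
proof -
  have C: "C \<subseteq> ambient n" "fvec.subspace C"
    using assms unfolding code_params_def linear_code_def by auto
  have "coord_scale c ` C \<subseteq> ambient n"
    using C(1) by (auto intro: coord_scale_ambient)
  then have "linear_code n (coord_scale c ` C)"
    unfolding linear_code_def using fvp.linear_subspace_image[OF linear_coord_scale C(2)] by blast
  moreover have "fvec.dim (coord_scale c ` C) = fvec.dim C"
    by (rule dim_linear_image_inj[OF linear_coord_scale inj_on_subset[OF inj_coord_scale subset_UNIV] C(2)])
  then have "fvec.dim (coord_scale c ` C) = k"
    using assms unfolding code_params_def by simp
  moreover have "coord_scale c x = 0 \<longleftrightarrow> x = 0" for x
    unfolding coord_scale_def using nonzero by (auto simp: fun_eq_iff)
  then have "min_dist_ge n (coord_scale c ` C) d"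
    using assms unfolding code_params_def min_dist_ge_def by (auto simp: hweight_coord_scale)
  ultimately show ?thesis
    unfolding code_params_def by blast
qed

lemma dual_code_coord_scale:
  "dual_code n (coord_scale c ` C) = coord_scale (\<lambda>i. inverse (c i)) ` dual_code n C"
proof (intro set_eqI iffI)
  fix v assume v: "v \<in> dual_code n (coord_scale c ` C)"
  have "coord_scale c v \<in> dual_code n C"
    using v coord_scale_ambient[of v n]
    unfolding dual_code_def inner_prod_def by (auto simp: coord_scale_def mult.assoc mult.left_commute)
  moreover have "v = coord_scale (\<lambda>i. inverse (c i)) (coord_scale c v)"
    unfolding coord_scale_def using nonzero by (simp add: fun_eq_iff)
  ultimately show "v \<in> coord_scale (\<lambda>i. inverse (c i)) ` dual_code n C"
    by blast
next
  fix v assume "v \<in> coord_scale (\<lambda>i. inverse (c i)) ` dual_code n C"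
  then obtain u where u: "u \<in> dual_code n C" "v = coord_scale (\<lambda>i. inverse (c i)) u"
    by blast
  have "v \<in> ambient n"
    using u coord_scale_ambient unfolding dual_code_def by blast
  moreover have "inner_prod n v (coord_scale c x) = inner_prod n u x" for x
    unfolding inner_prod_def u(2) coord_scale_def using nonzero by (intro sum.cong) (auto simp: field_simps)
  ultimately show "v \<in> dual_code n (coord_scale c ` C)"
    using u(1) unfolding dual_code_def by auto
qed

lemma code_hull_coord_scale:
  assumes "C \<subseteq> ambient n"
  shows "code_hull n (coord_scale c ` C) = coord_scale c ` weighted_radical n C (\<lambda>i. c i * c i)"
proof -
  have inner: "weighted_inner n (\<lambda>i. c i * c i) x y = inner_prod n (coord_scale c x) (coord_scale c y)"
    for x y
    unfolding weighted_inner_def inner_prod_def coord_scale_def by (intro sum.cong) (auto simp: algebra_simps)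
  show ?thesis
    unfolding code_hull_def dual_code_def weighted_radical_def inner
    using assms coord_scale_ambient by blast
qed

end

lemma exists_coord_scale_code_hull_dim_1:
  fixes C :: "(nat \<Rightarrow> 'a::field) set"
  assumes C: "fvec.subspace C" "C \<subseteq> ambient n"
    and squares: "\<And>y::'a. \<exists>x. x * x = y"
    and three: "\<exists>a b :: 'a. a \<noteq> 0 \<and> b \<noteq> 0 \<and> a \<noteq> b"
    and \<gamma>0: "weighted_radical n C \<gamma>0 = {0}"
    and \<gamma>1: "\<forall>i<n. \<gamma>1 i \<noteq> 0" "x \<in> weighted_radical n C \<gamma>1" "x \<noteq> 0"
  shows "\<exists>c. (\<forall>i. c i \<noteq> 0) \<and> fvec.dim (code_hull n (coord_scale c ` C)) = 1"
proof -
  obtain \<gamma>a where "\<forall>i<n. \<gamma>a i \<noteq> 0" "weighted_radical n C \<gamma>a = {0}"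
    using exists_nonvanishing_weights_trivial_radical[OF C(1) \<gamma>0 three] by blast
  then obtain \<gamma> where \<gamma>: "\<forall>i<n. \<gamma> i \<noteq> 0" "fvec.dim (weighted_radical n C \<gamma>) = 1"
    using exists_nonvanishing_weights_radical_dim_1[OF C _ _ \<gamma>1] by blast
  define c where "c i = (if i < n then (SOME x. x * x = \<gamma> i) else 1)" for i
  have c: "c i * c i = \<gamma> i" if "i < n" for i
    using someI_ex[OF squares[of "\<gamma> i"]] that unfolding c_def by simp
  have nonzero: "c i \<noteq> 0" for i
  proof (cases "i < n")
    case True
    then show ?thesis using c[OF True] \<gamma>(1) by (metis mult_zero_left)
  qed (simp add: c_def)
  have "weighted_radical n C (\<lambda>i. c i * c i) = weighted_radical n C \<gamma>"
    by (rule weighted_radical_cong) (rule c)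
  then have "code_hull n (coord_scale c ` C) = coord_scale c ` weighted_radical n C \<gamma>"
    using code_hull_coord_scale[OF nonzero C(2)] by simp
  moreover have "fvec.dim (coord_scale c ` weighted_radical n C \<gamma>) = fvec.dim (weighted_radical n C \<gamma>)"
    by (rule dim_linear_image_inj[OF linear_coord_scale
          inj_on_subset[OF inj_coord_scale[OF nonzero] subset_UNIV] subspace_weighted_radical[OF C(1)]])
  ultimately have "fvec.dim (code_hull n (coord_scale c ` C)) = 1"
    using \<gamma>(2) by simp
  with nonzero show ?thesis by blast
qed

section \<open>Finite fields of characteristic 2\<close>

lemma CHAR_eq_2_if_card_eq_power_2:
  assumes "card (UNIV :: 'a::{finite,field} set) = 2 ^ m" "m \<ge> 1"
  shows "CHAR('a) = 2"
proof -
  have "CHAR('a) > 0"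
    by (rule finite_imp_CHAR_pos) simp
  then have prime: "prime CHAR('a)"
    by (rule prime_CHAR_semidom)
  have "(\<Sum>x\<in>(UNIV::'a set). x + 1) = (\<Sum>x\<in>(UNIV::'a set). x)"
    by (rule sum.reindex_bij_witness[of _ "\<lambda>x. x - 1" "\<lambda>x. x + 1"]) auto
  then have "of_nat (card (UNIV::'a set)) = (0::'a)"
    by (simp add: sum.distrib)
  then have "CHAR('a) dvd 2 ^ m"
    using of_nat_eq_0_iff_char_dvd assms(1) by metis
  then have "CHAR('a) dvd 2"
    using prime prime_dvd_power by blast
  then show ?thesis
    using prime dvd_imp_le[of "CHAR('a)" 2] prime_ge_2_nat[OF prime] by simp
qed

lemma add_self_CHAR_2:
  assumes "CHAR('a::ring_1) = 2"
  shows "(x::'a) + x = 0"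
  using uminus_CHAR_2[OF assms, of x] by (metis add.right_inverse)

lemma power2_add_CHAR_2:
  assumes "CHAR('a::comm_ring_1) = 2"
  shows "((x::'a) + y) ^ 2 = x ^ 2 + y ^ 2"
proof -
  have "(x + y) ^ 2 = x ^ 2 + y ^ 2 + (x * y + x * y)"
    by (simp add: power2_eq_square algebra_simps)
  then show ?thesis
    using add_self_CHAR_2[OF assms] by simp
qed

lemma power_2_power_add_CHAR_2:
  assumes "CHAR('a::comm_ring_1) = 2"
  shows "((x::'a) + y) ^ (2 ^ i) = x ^ (2 ^ i) + y ^ (2 ^ i)"
proof (induction i)
  case (Suc i)
  have "(x + y) ^ (2 ^ Suc i) = ((x + y) ^ (2 ^ i)) ^ 2"
    by (simp add: power_mult[symmetric] mult.commute)
  also have "\<dots> = (x ^ (2 ^ i)) ^ 2 + (y ^ (2 ^ i)) ^ 2"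
    using Suc power2_add_CHAR_2[OF assms] by simp
  finally show ?case
    by (simp add: power_mult[symmetric] mult.commute)
qed simp

lemma power_card_eq_self:
  fixes x :: "'a::{finite,field}"
  shows "x ^ card (UNIV :: 'a set) = x"
proof (cases "x = 0")
  case False
  let ?U = "UNIV - {0::'a}"
  have "x ^ card ?U * (\<Prod>y\<in>?U. y) = (\<Prod>y\<in>?U. x * y)"
    by (simp add: prod.distrib)
  also have "\<dots> = (\<Prod>y\<in>?U. y)"
    by (rule prod.reindex_bij_witness[of _ "\<lambda>y. y / x" "\<lambda>y. x * y"]) (use False in auto)
  finally have "x ^ card ?U * (\<Prod>y\<in>?U. y) = 1 * (\<Prod>y\<in>?U. y)"
    by simp
  moreover have "(\<Prod>y\<in>?U. y) \<noteq> 0"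
    by simp
  ultimately have "x ^ card ?U = 1"
    by (rule mult_right_cancel[THEN iffD1, rotated])
  moreover have "card (UNIV :: 'a set) = Suc (card ?U)"
    using card_Suc_Diff1[of UNIV "0::'a"] by simp
  ultimately show ?thesis
    by (simp only: power_Suc mult_1_right)
qed (simp add: finite_UNIV_card_ge_0)

lemma surj_square_CHAR_2:
  assumes "CHAR('a::{finite,field}) = 2"
  shows "\<exists>x::'a. x * x = y"
proof -
  have "inj (\<lambda>x::'a. x * x)"
  proof (rule injI)
    fix x y :: 'a
    assume "x * x = y * y"
    then have "(x + y) * (x + y) = 0"
      using power2_add_CHAR_2[OF assms, of x y] add_self_CHAR_2[OF assms, of "y * y"]
      by (simp add: power2_eq_square)
    then show "x = y"
      using uminus_CHAR_2[OF assms, of y] by (simp add: add_eq_0_iff2)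
  qed
  then have "surj (\<lambda>x::'a. x * x)"
    using finite_UNIV_inj_surj[of "\<lambda>x::'a. x * x"] by simp
  then have "\<exists>x. y = x * x"
    by (rule surjD)
  then show ?thesis
    by auto
qed

section \<open>The absolute trace\<close>

lemma trace_polynomial:
  assumes "m \<ge> 1"
  defines "T \<equiv> (\<Sum>i<m. monom (1::'a::field) (2 ^ i))"
  shows "T \<noteq> 0" "degree T \<le> 2 ^ (m - 1)" "poly T x = abs_trace m x"
proof -
  have coeff_T: "coeff T n = (\<Sum>i<m. if 2 ^ i = n then 1 else 0)" for n
    unfolding T_def by (simp add: coeff_sum coeff_monom)
  have "(\<Sum>i<m. if 2 ^ i = (2::nat) ^ (m - 1) then (1::'a) else 0) = (\<Sum>i\<in>{m - 1}. 1)"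
    by (rule sum.mono_neutral_cong_right) (use assms(1) in auto)
  then have "coeff T (2 ^ (m - 1)) = 1"
    using coeff_T by simp
  then show "T \<noteq> 0" by auto
  show "degree T \<le> 2 ^ (m - 1)"
  proof (rule degree_le, intro allI impI)
    fix n :: nat
    assume n: "2 ^ (m - 1) < n"
    have "(2::nat) ^ i \<noteq> n" if "i < m" for i
      using power_increasing[of i "m - 1" 2] that n by auto
    then show "coeff T n = 0"
      using coeff_T by simp
  qed
  show "poly T x = abs_trace m x"
    unfolding T_def abs_trace_def by (simp add: poly_sum poly_monom)
qed

context
  fixes m :: nat
  assumes card: "card (UNIV :: 'a::{finite,field} set) = 2 ^ m" and m: "m \<ge> 1"
begin

lemma CHAR_eq_2: "CHAR('a) = 2"
  by (rule CHAR_eq_2_if_card_eq_power_2[OF card m])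

lemma abs_trace_square_add_self: "abs_trace m ((b::'a) ^ 2 + b) = 0"
proof -
  have "abs_trace m (b ^ 2 + b) = (\<Sum>i<m. b ^ (2 ^ Suc i) - b ^ (2 ^ i))"
    unfolding abs_trace_def
  proof (intro sum.cong refl)
    fix i
    have "(b ^ 2 + b) ^ (2 ^ i) = (b ^ 2) ^ (2 ^ i) + b ^ (2 ^ i)"
      by (rule power_2_power_add_CHAR_2[OF CHAR_eq_2])
    also have "(b ^ 2) ^ (2 ^ i) = b ^ (2 ^ Suc i)"
      by (simp add: power_mult[symmetric])
    finally show "(b ^ 2 + b) ^ (2 ^ i) = b ^ (2 ^ Suc i) - b ^ (2 ^ i)"
      by (simp add: minus_CHAR_2[OF CHAR_eq_2])
  qed
  also have "\<dots> = b ^ (2 ^ m) - b ^ (2 ^ 0)"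
    by (rule sum_lessThan_telescope)
  also have "b ^ (2 ^ m) = b"
    using power_card_eq_self[of b] card by simp
  finally show ?thesis by simp
qed

lemma card_abs_trace_eq_0_le: "card {c::'a. abs_trace m c = 0} \<le> 2 ^ (m - 1)"
proof -
  define T :: "'a poly" where "T = (\<Sum>i<m. monom 1 (2 ^ i))"
  have T: "T \<noteq> 0" "degree T \<le> 2 ^ (m - 1)" "\<And>x. poly T x = abs_trace m x"
    unfolding T_def by (rule trace_polynomial[OF m])+
  then have "{c. abs_trace m c = 0} = {x. poly T x = 0}"
    by simp
  also have "card \<dots> \<le> degree T"
    by (rule card_poly_roots_bound[OF T(1)])
  finally show ?thesis
    using T(2) by simp
qed

lemma card_square_add_self_eq_le_2: "card {b::'a. b ^ 2 + b = c} \<le> 2"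
proof (cases "\<exists>b0. b0 ^ 2 + b0 = c")
  case True
  then obtain b0 where b0: "b0 ^ 2 + b0 = c" by blast
  have "{b. b ^ 2 + b = c} \<subseteq> {b0, b0 + 1}"
  proof
    fix b assume "b \<in> {b. b ^ 2 + b = c}"
    then have "b ^ 2 + b = b0 ^ 2 + b0"
      using b0 by simp
    then have "(b + b0) ^ 2 + (b + b0) = (b0 ^ 2 + b0) + (b0 ^ 2 + b0)"
      by (simp add: power2_add_CHAR_2[OF CHAR_eq_2] algebra_simps)
    also have "\<dots> = 0"
      by (rule add_self_CHAR_2[OF CHAR_eq_2])
    finally have "(b + b0) * (b + b0 + 1) = 0"
      by (simp add: power2_eq_square algebra_simps)
    then have "b + b0 = 0 \<or> b + b0 + 1 = 0"
      by simp
    then show "b \<in> {b0, b0 + 1}"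
      using uminus_CHAR_2[OF CHAR_eq_2] by (auto simp: add_eq_0_iff2 add.assoc)
  qed
  then have "card {b. b ^ 2 + b = c} \<le> card {b0, b0 + 1}"
    by (rule card_mono[rotated]) simp
  also have "\<dots> \<le> 2"
    by (simp add: card_insert_if)
  finally show ?thesis .
qed simp

text \<open>The map \<open>b \<mapsto> b\<^sup>2 + b\<close> is two-to-one, so its image has \<open>2\<^bsup>m-1\<^esup>\<close> elements;
  it lies in the kernel of the trace, which has at most that many.\<close>

lemma abs_trace_eq_0_imp_square_add_self:
  assumes "abs_trace m (c::'a) = 0"
  shows "\<exists>b. b ^ 2 + b = c"
proof -
  define f where "f b = b ^ 2 + b" for b :: 'a
  define K where "K = {c::'a. abs_trace m c = 0}"
  have "card (UNIV :: 'a set) \<le> card (\<Union>c\<in>range f. {b. f b = c})"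
    by (rule card_mono) auto
  also have "\<dots> \<le> (\<Sum>c\<in>range f. card {b. f b = c})"
    by (rule card_UN_le) simp
  also have "\<dots> \<le> (\<Sum>c\<in>range f. 2)"
    by (rule sum_mono) (use card_square_add_self_eq_le_2 in \<open>simp add: f_def\<close>)
  finally have "2 ^ m \<le> 2 * card (range f)"
    using card by simp
  then have "2 ^ (m - 1) \<le> card (range f)"
    using m by (cases m) auto
  then have "card K \<le> card (range f)"
    using card_abs_trace_eq_0_le unfolding K_def by simp
  moreover have "range f \<subseteq> K"
    unfolding K_def f_def using abs_trace_square_add_self by auto
  ultimately have "range f = K"
    by (intro card_seteq) simp_all
  then have "c \<in> range f"
    using assms unfolding K_def by simp
  then obtain b where "c = f b"
    by blast
  then show ?thesis
    unfolding f_def by blast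
qed


lemma exists_points_on_curve:
  assumes "s \<le> card {a::'a. abs_trace m (a ^ 5) = 0}"
  obtains \<alpha> \<beta> :: "nat \<Rightarrow> 'a"
  where "inj_on \<alpha> {..<s}" "\<And>l. l < s \<Longrightarrow> \<beta> l ^ 2 + \<beta> l = \<alpha> l ^ 5"
proof -
  obtain \<alpha> :: "nat \<Rightarrow> 'a" where \<alpha>: "\<alpha> ` {..<s} \<subseteq> {a. abs_trace m (a ^ 5) = 0}" "inj_on \<alpha> {..<s}"
    using card_le_inj[of "{..<s}" "{a::'a. abs_trace m (a ^ 5) = 0}"] assms by auto
  define \<beta> where "\<beta> l = (SOME b. b ^ 2 + b = \<alpha> l ^ 5)" for l
  have "\<beta> l ^ 2 + \<beta> l = \<alpha> l ^ 5" if "l < s" for l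
    unfolding \<beta>_def
    by (rule someI_ex, rule abs_trace_eq_0_imp_square_add_self) (use \<alpha>(1) that in auto)
  with \<alpha>(2) show ?thesis
    using that by blast
qed

lemma exists_two_distinct_nonzero:
  assumes "m \<ge> 2"
  shows "\<exists>a b::'a. a \<noteq> 0 \<and> b \<noteq> 0 \<and> a \<noteq> b"
proof -
  have "(2::nat) ^ 2 \<le> 2 ^ m"
    using assms by (intro power_increasing) simp_all
  then have "card {0::'a, 1} < card (UNIV :: 'a set)"
    using card by simp
  then have "UNIV \<noteq> {0::'a, 1}"
    by (metis less_irrefl)
  then obtain b :: 'a where "b \<notin> {0, 1}"
    by blast
  then show ?thesis
    by (intro exI[of _ 1] exI[of _ b]) auto
qed

end

section \<open>Polynomials\<close>

lemma coeff_mult_degree_le: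
  fixes p q :: "'a::idom poly"
  assumes "degree p \<le> a" "degree q \<le> b"
  shows "coeff (p * q) (a + b) = coeff p a * coeff q b"
proof (cases "degree p = a \<and> degree q = b")
  case True
  then show ?thesis using coeff_mult_degree_sum[of p q] by simp
next
  case False
  then have "degree p < a \<or> degree q < b"
    using assms by auto
  then have "coeff p a * coeff q b = 0" "degree (p * q) < a + b"
    using degree_mult_le[of p q] assms by (auto simp: coeff_eq_0)
  then show ?thesis by (simp add: coeff_eq_0)
qed

lemma poly_eq_0_if_roots:
  fixes p :: "'a::idom poly"
  assumes "finite S" "\<And>x. x \<in> S \<Longrightarrow> poly p x = 0" "degree p < card S"
  shows "p = 0"
proof (rule ccontr)
  assume "p \<noteq> 0"
  then have "card S \<le> card {x. poly p x = 0}"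
    using assms(2) by (intro card_mono poly_roots_finite) auto
  also have "\<dots> \<le> degree p"
    by (rule card_poly_roots_bound[OF \<open>p \<noteq> 0\<close>])
  finally show False
    using assms(3) by simp
qed

definition lagrange_basis :: "(nat \<Rightarrow> 'a::field) \<Rightarrow> nat \<Rightarrow> nat \<Rightarrow> 'a poly" where
  "lagrange_basis x n l = (\<Prod>j\<in>{..<n}-{l}. [:-x j, 1:])"

definition lagrange_weight :: "(nat \<Rightarrow> 'a::field) \<Rightarrow> nat \<Rightarrow> nat \<Rightarrow> 'a" where
  "lagrange_weight x n l = inverse (\<Prod>j\<in>{..<n}-{l}. x l - x j)"

lemma lagrange_weight_nonzero:
  "inj_on x {..<n} \<Longrightarrow> l < n \<Longrightarrow> lagrange_weight x n l \<noteq> 0"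
  unfolding lagrange_weight_def by (auto simp: inj_on_def)

context
  fixes x :: "nat \<Rightarrow> 'a::field" and n :: nat
  assumes inj: "inj_on x {..<n}"
begin

lemma degree_lagrange_basis: "l < n \<Longrightarrow> degree (lagrange_basis x n l) = n - 1"
  unfolding lagrange_basis_def by (subst degree_prod_eq_sum_degree) auto

lemma coeff_lagrange_basis: "l < n \<Longrightarrow> coeff (lagrange_basis x n l) (n - 1) = 1"
  using degree_lagrange_basis[of l] lead_coeff_prod[of "\<lambda>j. [:-x j, 1:]" "{..<n}-{l}"]
  unfolding lagrange_basis_def by simp

lemma poly_lagrange_basis:
  assumes "k < n" "l < n"
  shows "lagrange_weight x n l * poly (lagrange_basis x n l) (x k) = (if k = l then 1 else 0)"
proof (cases "k = l")
  case True
  have "(\<Prod>j\<in>{..<n}-{l}. x l - x j) \<noteq> 0"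
    using inj assms by (auto simp: inj_on_def)
  then show ?thesis
    using True unfolding lagrange_weight_def lagrange_basis_def by (simp add: poly_prod)
next
  case False
  then have "k \<in> {..<n}-{l}" using assms by simp
  then have "poly (lagrange_basis x n l) (x k) = 0"
    unfolding lagrange_basis_def poly_prod by (intro prod_zero) auto
  then show ?thesis
    using False by simp
qed

lemma lagrange_interpolation:
  assumes "degree p < n"
  shows "p = (\<Sum>l<n. smult (lagrange_weight x n l * poly p (x l)) (lagrange_basis x n l))"
    (is "p = ?L")
proof -
  have "poly (p - ?L) (x k) = 0" if "k < n" for k
  proof -
    have "poly ?L (x k) = (\<Sum>l<n. poly p (x l) * (lagrange_weight x n l * poly (lagrange_basis x n l) (x k)))"
      by (simp add: poly_sum algebra_simps)
    also have "\<dots> = (\<Sum>l<n. if l = k then poly p (x l) else 0)"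
      by (intro sum.cong refl) (use that in \<open>auto simp: poly_lagrange_basis\<close>)
    also have "\<dots> = poly p (x k)"
      using that by (simp add: sum.delta)
    finally show ?thesis by simp
  qed
  moreover have "degree ?L \<le> n - 1"
    by (rule degree_sum_le) (use degree_lagrange_basis degree_smult_le in \<open>auto intro: order_trans\<close>)
  then have "degree (p - ?L) < n"
    using assms degree_diff_le_max[of p ?L] by linarith
  ultimately have "p - ?L = 0"
    using inj by (intro poly_eq_0_if_roots[of "x ` {..<n}"]) (auto simp: card_image)
  then show ?thesis by simp
qed

lemma sum_lagrange_weight_eq_coeff:
  assumes "degree p < n"
  shows "(\<Sum>l<n. lagrange_weight x n l * poly p (x l)) = coeff p (n - 1)"
proof -
  have "coeff p (n - 1) = (\<Sum>l<n. lagrange_weight x n l * poly p (x l) * coeff (lagrange_basis x n l) (n - 1))"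
    by (subst lagrange_interpolation[OF assms]) (simp add: coeff_sum)
  also have "\<dots> = (\<Sum>l<n. lagrange_weight x n l * poly p (x l))"
    by (intro sum.cong refl) (use coeff_lagrange_basis in simp)
  finally show ?thesis ..
qed

end

section \<open>Codes from the curve \<open>y\<^sup>2 + y = x\<^sup>5\<close>\<close>

lemma subspace_pair_image:
  fixes f :: "'a::field poly \<Rightarrow> 'a poly \<Rightarrow> nat \<Rightarrow> 'a"
  assumes "P 0 0" "f 0 0 = 0"
    and "\<And>A1 B1 A2 B2. P A1 B1 \<Longrightarrow> P A2 B2 \<Longrightarrow> P (A1 + A2) (B1 + B2)"
    and "\<And>a A B. P A B \<Longrightarrow> P (smult a A) (smult a B)"
    and "\<And>A1 B1 A2 B2. f (A1 + A2) (B1 + B2) = f A1 B1 + f A2 B2"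
    and "\<And>a A B. f (smult a A) (smult a B) = vscale a (f A B)"
  shows "fvec.subspace {f A B |A B. P A B}"
  unfolding fvec.subspace_def
proof (intro conjI ballI allI)
  show "0 \<in> {f A B |A B. P A B}"
    using assms(1,2) by (metis (mono_tags, lifting) mem_Collect_eq)
next
  fix x y assume "x \<in> {f A B |A B. P A B}" "y \<in> {f A B |A B. P A B}"
  then obtain A1 B1 A2 B2 where "x = f A1 B1" "P A1 B1" "y = f A2 B2" "P A2 B2"
    by blast
  then have "x + y = f (A1 + A2) (B1 + B2)" "P (A1 + A2) (B1 + B2)"
    using assms(3,5) by simp_all
  then show "x + y \<in> {f A B |A B. P A B}"
    by blast
next
  fix a x assume "x \<in> {f A B |A B. P A B}"
  then obtain A B where "x = f A B" "P A B"
    by blast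
  then have "vscale a x = f (smult a A) (smult a B)" "P (smult a A) (smult a B)"
    using assms(4,6) by simp_all
  then show "vscale a x \<in> {f A B |A B. P A B}"
    by blast
qed

lemma div_2_eq_imp_Suc:
  fixes a b :: nat
  assumes "a < b" "a div 2 = b div 2"
  shows "b = Suc a \<and> even a"
  using assms by presburger

lemma sum_lessThan_double:
  fixes f :: "nat \<Rightarrow> 'a::comm_monoid_add"
  shows "(\<Sum>j<2*n. f j) = (\<Sum>l<n. f (2*l) + f (2*l + 1))"
  by (induction n) (simp_all add: algebra_simps)

lemma degree_add_dominant:
  fixes p q :: "'a::idom poly"
  assumes "degree q < degree p"
  shows "p + q \<noteq> 0" "degree (p + q) = degree p"
proof -
  show "degree (p + q) = degree p"
    using assms by (rule degree_add_eq_left)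
  then show "p + q \<noteq> 0"
    using assms by auto
qed

text \<open>The norm of \<open>A(x) + B(x) y\<close> from the function field of \<open>y\<^sup>2 + y = x\<^sup>5\<close> down to
  the rational functions in \<open>x\<close>.\<close>

definition curve_norm :: "'a::comm_ring_1 poly \<Rightarrow> 'a poly \<Rightarrow> 'a poly" where
  "curve_norm A B = A * A + A * B + B * B * monom 1 5"

text \<open>The degrees of \<open>A\<^sup>2\<close> and \<open>B\<^sup>2 x\<^sup>5\<close> have different parity, so one of them dominates.\<close>

lemma curve_norm_nonzero_degree_le:
  fixes A B :: "'a::idom poly"
  assumes nz: "A \<noteq> 0 \<or> B \<noteq> 0" and dA: "2 * degree A \<le> M"
    and dB: "B \<noteq> 0 \<Longrightarrow> 2 * degree B + 5 \<le> M"
  shows "curve_norm A B \<noteq> 0 \<and> degree (curve_norm A B) \<le> M"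
proof -
  have "A * A + A * B + B * B * monom 1 5 \<noteq> 0 \<and> degree (A * A + A * B + B * B * monom 1 5) \<le> M"
  proof (cases "B = 0")
    case True
    then show ?thesis
      using nz dA degree_mult_eq[of A A] by simp
  next
    case B: False
    have d3: "degree (B * B * monom 1 5) = 2 * degree B + 5" "B * B * monom 1 5 \<noteq> 0"
      using B by (simp_all add: degree_mult_eq degree_monom_eq)
    show ?thesis
    proof (cases "A = 0")
      case True
      then show ?thesis
        using d3 dB[OF B] by simp
    next
      case A: False
      have d1: "degree (A * A) = 2 * degree A" and d2: "degree (A * B) = degree A + degree B"
        using A B by (simp_all add: degree_mult_eq)
      show ?thesis
      proof (cases "2 * degree B + 5 < 2 * degree A")
        case True
        then have "degree (A * B + B * B * monom 1 5) < degree (A * A)"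
          using d1 d2 d3 by (intro degree_add_less) linarith+
        from degree_add_dominant[OF this] show ?thesis
          using d1 dA by (simp add: add.assoc)
      next
        case False
        then have "2 * degree A < 2 * degree B + 5"
          by presburger
        then have "degree (A * A + A * B) < degree (B * B * monom 1 5)"
          using d1 d2 d3 by (intro degree_add_less) linarith+
        from degree_add_dominant[OF this] show ?thesis
          using d3 dB[OF B] by (simp add: add.commute)
      qed
    qed
  qed
  then show ?thesis
    unfolding curve_norm_def .
qed

text \<open>The \<open>2s\<close> coordinates \<open>2l\<close> and \<open>2l + 1\<close> are the two points \<open>(\<alpha> l, \<beta> l)\<close> and
  \<open>(\<alpha> l, \<beta> l + 1)\<close> of the curve above \<open>\<alpha> l\<close>; a function \<open>A(x) + B(x) y\<close> is evaluated
  there.\<close>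

locale curve_code =
  fixes \<alpha> \<beta> :: "nat \<Rightarrow> 'a::field" and s r :: nat
  assumes CHAR_2: "CHAR('a) = 2"
    and inj: "inj_on \<alpha> {..<s}"
    and on_curve: "\<And>l. l < s \<Longrightarrow> \<beta> l ^ 2 + \<beta> l = \<alpha> l ^ 5"
    and r_ge_1: "1 \<le> r" and r_le: "r + 2 \<le> s"
begin

definition point_x :: "nat \<Rightarrow> 'a" where
  "point_x j = \<alpha> (j div 2)"

definition point_y :: "nat \<Rightarrow> 'a" where
  "point_y j = \<beta> (j div 2) + (if even j then 0 else 1)"

definition eval :: "'a poly \<Rightarrow> 'a poly \<Rightarrow> nat \<Rightarrow> 'a" where
  "eval A B j = poly A (point_x j) + poly B (point_x j) * point_y j"

definition codeword :: "(nat \<Rightarrow> 'a) \<Rightarrow> 'a \<Rightarrow> 'a poly \<Rightarrow> 'a poly \<Rightarrow> nat \<Rightarrow> 'a" where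
  "codeword w e A B = (\<lambda>j. if j < 2*s then w (j div 2) * eval A B j else if j = 2*s then e else 0)"

definition C_word :: "'a poly \<Rightarrow> 'a poly \<Rightarrow> nat \<Rightarrow> 'a" where
  "C_word A B = codeword (\<lambda>_. 1) (coeff B (r - 1)) A B"

definition D_word :: "'a poly \<Rightarrow> 'a poly \<Rightarrow> nat \<Rightarrow> 'a" where
  "D_word A B = codeword (lagrange_weight \<alpha> s) (coeff A (s - r)) A B"

definition C_degrees :: "'a poly \<Rightarrow> 'a poly \<Rightarrow> bool" where
  "C_degrees A B \<longleftrightarrow> degree A \<le> r + 1 \<and> degree B \<le> r - 1"

text \<open>The condition on \<open>B\<close> is \<open>deg B \<le> s - r - 3\<close> without truncated subtraction:
  for \<open>s = r + 2\<close> it forces \<open>B = 0\<close>.\<close>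

definition D_degrees :: "'a poly \<Rightarrow> 'a poly \<Rightarrow> bool" where
  "D_degrees A B \<longleftrightarrow> degree A \<le> s - r \<and> (B = 0 \<or> degree B + r + 3 \<le> s)"

definition C_code :: "(nat \<Rightarrow> 'a) set" where
  "C_code = {C_word A B |A B. C_degrees A B}"

definition D_code :: "(nat \<Rightarrow> 'a) set" where
  "D_code = {D_word A B |A B. D_degrees A B}"

lemma two_eq_0: "(2::'a) = 0"
  using of_nat_CHAR[where 'a='a] CHAR_2 by simp

lemma eval_add: "eval (A1 + A2) (B1 + B2) j = eval A1 B1 j + eval A2 B2 j"
  unfolding eval_def by (simp add: algebra_simps)

lemma eval_smult: "eval (smult a A) (smult a B) j = a * eval A B j"
  unfolding eval_def by (simp add: algebra_simps)

lemma codeword_add: "codeword w (e1 + e2) (A1 + A2) (B1 + B2) = codeword w e1 A1 B1 + codeword w e2 A2 B2"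
  unfolding codeword_def by (auto simp: fun_eq_iff eval_add algebra_simps)

lemma codeword_smult: "codeword w (a * e) (smult a A) (smult a B) = vscale a (codeword w e A B)"
  unfolding codeword_def vscale_def by (auto simp: fun_eq_iff eval_smult algebra_simps)

lemma codeword_0: "codeword w 0 0 0 = 0"
  unfolding codeword_def eval_def by (auto simp: fun_eq_iff)

lemma codeword_ambient: "codeword w e A B \<in> ambient (2*s+1)"
  unfolding codeword_def ambient_def by auto

lemma codeword_less: "j < 2*s \<Longrightarrow> codeword w e A B j = w (j div 2) * eval A B j"
  unfolding codeword_def by simp

lemma codeword_extra: "codeword w e A B (2*s) = e"
  unfolding codeword_def by simp

lemma C_word_0: "C_word 0 0 = 0"
  unfolding C_word_def using codeword_0 by simp

lemma D_word_0: "D_word 0 0 = 0"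
  unfolding D_word_def using codeword_0 by simp

lemma C_code_subset_ambient: "C_code \<subseteq> ambient (2*s+1)"
  unfolding C_code_def C_word_def using codeword_ambient by auto

lemma D_code_subset_ambient: "D_code \<subseteq> ambient (2*s+1)"
  unfolding D_code_def D_word_def using codeword_ambient by auto

lemma subspace_C_code: "fvec.subspace C_code"
  unfolding C_code_def
proof (rule subspace_pair_image)
  show "C_degrees (A1 + A2) (B1 + B2)" if "C_degrees A1 B1" "C_degrees A2 B2" for A1 B1 A2 B2
    using that degree_add_le unfolding C_degrees_def by blast
  show "C_degrees (smult a A) (smult a B)" if "C_degrees A B" for a A B
    using that degree_smult_le order_trans unfolding C_degrees_def by blast
qed (simp_all add: C_word_def C_degrees_def codeword_0 flip: codeword_add codeword_smult)

lemma subspace_D_code: "fvec.subspace D_code"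
  unfolding D_code_def
proof (rule subspace_pair_image)
  show "D_degrees (A1 + A2) (B1 + B2)" if "D_degrees A1 B1" "D_degrees A2 B2" for A1 B1 A2 B2
    using that degree_add_le[of A1 "s - r" A2] degree_add_le_max[of B1 B2]
    unfolding D_degrees_def by (cases "B1 = 0"; cases "B2 = 0") auto
  show "D_degrees (smult a A) (smult a B)" if "D_degrees A B" for a A B
    using that unfolding D_degrees_def by (auto simp: degree_smult_eq)
qed (simp_all add: D_word_def D_degrees_def codeword_0 flip: codeword_add codeword_smult)

definition node_poly :: "nat \<Rightarrow> 'a poly" where
  "node_poly l = (\<Prod>i<l. [:-\<alpha> i, 1:])"

lemma degree_node_poly: "degree (node_poly l) = l"
  unfolding node_poly_def by (subst degree_prod_eq_sum_degree) auto

lemma poly_node_poly_eq_0_iff: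
  assumes "l \<le> s" "l' < s"
  shows "poly (node_poly l) (\<alpha> l') = 0 \<longleftrightarrow> l' < l"
proof
  assume "poly (node_poly l) (\<alpha> l') = 0"
  then obtain i where i: "i < l" "\<alpha> l' = \<alpha> i"
    unfolding node_poly_def poly_prod by auto
  then have "l' = i"
    using inj assms by (auto simp: inj_on_def)
  then show "l' < l" using i by simp
next
  assume "l' < l"
  then show "poly (node_poly l) (\<alpha> l') = 0"
    unfolding node_poly_def poly_prod by (intro prod_zero) auto
qed

text \<open>The triangular bases: the \<open>j\<close>-th function (\<open>j \<ge> 1\<close>) lives on the fiber \<open>piv_fiber F j\<close>;
  for \<open>j \<le> 2F\<close> the functions alternate between \<open>node_poly f\<close> and \<open>node_poly f \<cdot> (y + \<beta> f)\<close>,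
  beyond that only \<open>node_poly f\<close> occurs.  The \<open>j\<close>-th function vanishes on all earlier pivot
  coordinates and not on its own, \<open>piv_pos F j\<close>.  Index \<open>0\<close> is taken by a word whose pivot
  is the extra coordinate.\<close>

definition piv_fiber :: "nat \<Rightarrow> nat \<Rightarrow> nat" where
  "piv_fiber F j = (if j \<le> 2*F then (j - 1) div 2 else j - F - 1)"

definition piv_pos :: "nat \<Rightarrow> nat \<Rightarrow> nat" where
  "piv_pos F j = (if j \<le> 2*F then j - 1 else 2*(j - F - 1))"

definition piv_uses_y :: "nat \<Rightarrow> nat \<Rightarrow> bool" where
  "piv_uses_y F j \<longleftrightarrow> j \<le> 2*F \<and> even j"

definition piv_A :: "nat \<Rightarrow> nat \<Rightarrow> 'a poly" where
  "piv_A F j = (if piv_uses_y F j then smult (\<beta> (piv_fiber F j)) (node_poly (piv_fiber F j))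
     else node_poly (piv_fiber F j))"

definition piv_B :: "nat \<Rightarrow> nat \<Rightarrow> 'a poly" where
  "piv_B F j = (if piv_uses_y F j then node_poly (piv_fiber F j) else 0)"

lemma eval_piv:
  "eval (piv_A F j) (piv_B F j) c = poly (node_poly (piv_fiber F j)) (point_x c) *
     (if piv_uses_y F j then \<beta> (piv_fiber F j) + point_y c else 1)"
  unfolding eval_def piv_A_def piv_B_def by (auto simp: algebra_simps)

lemma piv_pos_div_2: "1 \<le> j \<Longrightarrow> piv_pos F j div 2 = piv_fiber F j"
  unfolding piv_pos_def piv_fiber_def by auto

lemma piv_pos_uses_y: "1 \<le> j \<Longrightarrow> piv_uses_y F j \<Longrightarrow> piv_pos F j = 2 * piv_fiber F j + 1"
  unfolding piv_pos_def piv_fiber_def piv_uses_y_def by (auto; presburger)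

lemma piv_fiber_mono: "1 \<le> i \<Longrightarrow> i < j \<Longrightarrow> piv_fiber F i \<le> piv_fiber F j"
  unfolding piv_fiber_def by (auto simp: div_le_mono)

lemma piv_fiber_less: "1 \<le> j \<Longrightarrow> j \<le> 2*F \<Longrightarrow> piv_fiber F j < F"
  unfolding piv_fiber_def using less_mult_imp_div_less[of "j - 1" F 2] by simp

lemma piv_fiber_eq:
  assumes "1 \<le> i" "i < j" "piv_fiber F i = piv_fiber F j"
  shows "piv_uses_y F j \<and> piv_pos F i = 2 * piv_fiber F i"
proof (cases "j \<le> 2*F")
  case True
  then have i: "i \<le> 2*F"
    using assms(2) by simp
  then have "(i - 1) div 2 = (j - 1) div 2"
    using assms(3) True by (simp add: piv_fiber_def)
  then have "j - 1 = Suc (i - 1)" "even (i - 1)"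
    using div_2_eq_imp_Suc[of "i - 1" "j - 1"] assms(1,2) by simp_all
  moreover have "j = Suc i"
    using calculation(1) assms(1,2) by simp
  ultimately have "even j" "piv_pos F i = 2 * piv_fiber F i"
    using assms(1) i by (simp_all add: piv_pos_def piv_fiber_def)
  then show ?thesis
    using True by (simp add: piv_uses_y_def)
next
  case False
  have "piv_fiber F i < piv_fiber F j"
  proof (cases "i \<le> 2*F")
    case True
    then show ?thesis
      using piv_fiber_less[OF assms(1) True] False unfolding piv_fiber_def by simp
  qed (use False assms(2) in \<open>simp add: piv_fiber_def\<close>)
  then show ?thesis
    using assms(3) by simp
qed

lemma piv_fiber_uses_y: "piv_uses_y F j \<Longrightarrow> 1 \<le> j \<Longrightarrow> piv_fiber F j + 1 \<le> F"
  unfolding piv_uses_y_def piv_fiber_def by (auto; presburger)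

lemma inj_on_piv_pos: "inj_on (piv_pos F) {1..}"
proof (rule inj_onI)
  fix i j assume "i \<in> {1..}" "j \<in> {1..}" "piv_pos F i = piv_pos F j"
  then show "i = j"
    unfolding piv_pos_def by (cases "i \<le> 2*F"; cases "j \<le> 2*F") auto
qed

lemma piv_pos_less: "1 \<le> j \<Longrightarrow> piv_fiber F j < s \<Longrightarrow> piv_pos F j < 2*s"
  unfolding piv_pos_def piv_fiber_def by (auto split: if_splits)

lemma degree_piv_A: "degree (piv_A F j) \<le> piv_fiber F j"
  unfolding piv_A_def using degree_node_poly degree_smult_le
  by (auto split: if_splits intro: order_trans)

lemma degree_piv_B: "piv_B F j \<noteq> 0 \<Longrightarrow> degree (piv_B F j) = piv_fiber F j \<and> piv_uses_y F j"
  unfolding piv_B_def using degree_node_poly by (auto split: if_splits)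

lemma degree_piv_B_less:
  "1 \<le> j \<Longrightarrow> piv_B F j \<noteq> 0 \<Longrightarrow> degree (piv_B F j) + 1 \<le> F"
  using degree_piv_B piv_fiber_uses_y by fastforce

lemma eval_piv_vanish:
  assumes j: "1 \<le> j" "piv_fiber F j < s" and i: "1 \<le> i" "i < j"
  shows "eval (piv_A F j) (piv_B F j) (piv_pos F i) = 0"
proof -
  have x: "point_x (piv_pos F i) = \<alpha> (piv_fiber F i)"
    unfolding point_x_def using piv_pos_div_2[OF i(1)] by simp
  have fi: "piv_fiber F i < s"
    using piv_fiber_mono[OF i, of F] j(2) by simp
  show ?thesis
  proof (cases "piv_fiber F i < piv_fiber F j")
    case True
    then have "poly (node_poly (piv_fiber F j)) (point_x (piv_pos F i)) = 0"
      unfolding x using poly_node_poly_eq_0_iff j(2) fi by simp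
    then show ?thesis
      unfolding eval_piv by simp
  next
    case False
    then have eq: "piv_fiber F i = piv_fiber F j"
      using piv_fiber_mono[OF i, of F] by simp
    from piv_fiber_eq[OF i(1,2) eq] have yj: "piv_uses_y F j"
      and "piv_pos F i = 2 * piv_fiber F i"
      by auto
    then have "point_y (piv_pos F i) = \<beta> (piv_fiber F j)"
      unfolding point_y_def using eq by simp
    then show ?thesis
      unfolding eval_piv using yj add_self_CHAR_2[OF CHAR_2] by simp
  qed
qed

lemma eval_piv_pivot:
  assumes j: "1 \<le> j" "piv_fiber F j < s"
  shows "eval (piv_A F j) (piv_B F j) (piv_pos F j) \<noteq> 0"
proof -
  have x: "point_x (piv_pos F j) = \<alpha> (piv_fiber F j)"
    unfolding point_x_def using piv_pos_div_2[OF j(1)] by simp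
  have "poly (node_poly (piv_fiber F j)) (point_x (piv_pos F j)) \<noteq> 0"
    unfolding x using poly_node_poly_eq_0_iff j(2) by simp
  moreover have "\<beta> (piv_fiber F j) + point_y (piv_pos F j) = 1" if "piv_uses_y F j"
    using piv_pos_uses_y[OF j(1) that] add_self_CHAR_2[OF CHAR_2]
    unfolding point_y_def by (simp flip: add.assoc)
  ultimately show ?thesis
    unfolding eval_piv by auto
qed

definition C_basis :: "nat \<Rightarrow> nat \<Rightarrow> 'a" where
  "C_basis j = (if j = 0 then C_word 0 (monom 1 (r - 1)) else C_word (piv_A (r - 1) j) (piv_B (r - 1) j))"

definition C_pivot :: "nat \<Rightarrow> nat" where
  "C_pivot j = (if j = 0 then 2*s else piv_pos (r - 1) j)"

definition D_basis :: "nat \<Rightarrow> nat \<Rightarrow> 'a" where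
  "D_basis j = (if j = 0 then D_word (monom 1 (s - r)) 0 else D_word (piv_A (s - r - 2) j) (piv_B (s - r - 2) j))"

definition D_pivot :: "nat \<Rightarrow> nat" where
  "D_pivot j = (if j = 0 then 2*s else piv_pos (s - r - 2) j)"

lemma C_piv_fiber_le: "1 \<le> j \<Longrightarrow> j < 2*r + 2 \<Longrightarrow> piv_fiber (r - 1) j \<le> r + 1"
  unfolding piv_fiber_def using r_ge_1 by auto

lemma D_piv_fiber_le: "1 \<le> j \<Longrightarrow> j < 2*s - 2*r - 1 \<Longrightarrow> piv_fiber (s - r - 2) j \<le> s - r - 1"
  unfolding piv_fiber_def using r_le by auto

lemma C_piv_fiber_less: "1 \<le> j \<Longrightarrow> j < 2*r + 2 \<Longrightarrow> piv_fiber (r - 1) j < s"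
  using C_piv_fiber_le r_le by fastforce

lemma D_piv_fiber_less: "1 \<le> j \<Longrightarrow> j < 2*s - 2*r - 1 \<Longrightarrow> piv_fiber (s - r - 2) j < s"
  using D_piv_fiber_le r_le r_ge_1 by fastforce

lemma C_basis_mem:
  assumes "j < 2*r + 2"
  shows "C_basis j \<in> C_code"
proof (cases "j = 0")
  case True
  have "C_degrees 0 (monom 1 (r - 1))"
    unfolding C_degrees_def by (simp add: degree_monom_eq)
  then show ?thesis
    using True unfolding C_basis_def C_code_def by auto
next
  case False
  then have "degree (piv_A (r - 1) j) \<le> r + 1"
    using degree_piv_A C_piv_fiber_le[of j] assms order_trans by fastforce
  moreover have "degree (piv_B (r - 1) j) \<le> r - 1"
    using degree_piv_B_less[of j "r - 1"] False by (cases "piv_B (r - 1) j = 0") auto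
  ultimately have "C_degrees (piv_A (r - 1) j) (piv_B (r - 1) j)"
    unfolding C_degrees_def by simp
  then show ?thesis
    using False unfolding C_basis_def C_code_def by auto
qed

lemma D_basis_mem:
  assumes "j < 2*s - 2*r - 1"
  shows "D_basis j \<in> D_code"
proof (cases "j = 0")
  case True
  have "D_degrees (monom 1 (s - r)) 0"
    unfolding D_degrees_def by (simp add: degree_monom_eq)
  then show ?thesis
    using True unfolding D_basis_def D_code_def by auto
next
  case False
  then have "degree (piv_A (s - r - 2) j) \<le> s - r"
    using degree_piv_A D_piv_fiber_le[of j] assms order_trans by fastforce
  moreover have "piv_B (s - r - 2) j = 0 \<or> degree (piv_B (s - r - 2) j) + r + 3 \<le> s"
    using degree_piv_B_less[of j "s - r - 2"] False r_le by (cases "piv_B (s - r - 2) j = 0") auto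
  ultimately have "D_degrees (piv_A (s - r - 2) j) (piv_B (s - r - 2) j)"
    unfolding D_degrees_def by simp
  then show ?thesis
    using False unfolding D_basis_def D_code_def by auto
qed

lemma C_triangular: "triangular_family C_basis C_pivot (2*r + 2)"
proof
  fix i j assume ij: "i < j" "j < 2*r + 2"
  then have j: "1 \<le> j" "piv_fiber (r - 1) j < s"
    using C_piv_fiber_less[of j] by auto
  show "C_basis j (C_pivot i) = 0"
  proof (cases "i = 0")
    case True
    have "coeff (piv_B (r - 1) j) (r - 1) = 0"
      using degree_piv_B_less[OF j(1), of "r - 1"] by (cases "piv_B (r - 1) j = 0") (auto intro: coeff_eq_0)
    then show ?thesis
      using True j(1) unfolding C_basis_def C_pivot_def C_word_def by (simp add: codeword_extra)
  next
    case False
    then have i1: "1 \<le> i" by simp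
    have "piv_fiber (r - 1) i < s"
      using piv_fiber_mono[OF i1 ij(1), of "r - 1"] j(2) by simp
    then have "piv_pos (r - 1) i < 2*s"
      using piv_pos_less[OF i1] by simp
    then show ?thesis
      using False j eval_piv_vanish[OF j i1 ij(1)]
      unfolding C_basis_def C_pivot_def C_word_def by (simp add: codeword_less)
  qed
next
  fix j assume j: "j < 2*r + 2"
  show "C_basis j (C_pivot j) \<noteq> 0"
  proof (cases "j = 0")
    case False
    then have j1: "1 \<le> j" by simp
    have "piv_fiber (r - 1) j < s"
      using C_piv_fiber_less[OF j1 j] .
    then show ?thesis
      using False piv_pos_less[OF j1] eval_piv_pivot[OF j1]
      unfolding C_basis_def C_pivot_def C_word_def by (simp add: codeword_less)
  qed (simp add: C_basis_def C_pivot_def C_word_def codeword_extra)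
qed

lemma D_triangular: "triangular_family D_basis D_pivot (2*s - 2*r - 1)"
proof
  fix i j assume ij: "i < j" "j < 2*s - 2*r - 1"
  then have j: "1 \<le> j" "piv_fiber (s - r - 2) j < s"
    using D_piv_fiber_less[of j] by auto
  show "D_basis j (D_pivot i) = 0"
  proof (cases "i = 0")
    case True
    have "degree (piv_A (s - r - 2) j) < s - r"
      using degree_piv_A[of "s - r - 2" j] D_piv_fiber_le[OF j(1) ij(2)] r_le by linarith
    then have "coeff (piv_A (s - r - 2) j) (s - r) = 0"
      by (intro coeff_eq_0) simp
    then show ?thesis
      using True j(1) unfolding D_basis_def D_pivot_def D_word_def by (simp add: codeword_extra)
  next
    case False
    then have i1: "1 \<le> i" by simp
    have "piv_fiber (s - r - 2) i < s"
      using piv_fiber_mono[OF i1 ij(1), of "s - r - 2"] j(2) by simp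
    then have "piv_pos (s - r - 2) i < 2*s"
      using piv_pos_less[OF i1] by simp
    then show ?thesis
      using False j eval_piv_vanish[OF j i1 ij(1)]
      unfolding D_basis_def D_pivot_def D_word_def by (simp add: codeword_less)
  qed
next
  fix j assume j: "j < 2*s - 2*r - 1"
  show "D_basis j (D_pivot j) \<noteq> 0"
  proof (cases "j = 0")
    case False
    then have j1: "1 \<le> j" by simp
    have js: "piv_fiber (s - r - 2) j < s"
      using D_piv_fiber_less[OF j1 j] .
    then have "lagrange_weight \<alpha> s (piv_pos (s - r - 2) j div 2) \<noteq> 0"
      using piv_pos_div_2[OF j1] lagrange_weight_nonzero[OF inj] by simp
    then show ?thesis
      using False js piv_pos_less[OF j1] eval_piv_pivot[OF j1]
      unfolding D_basis_def D_pivot_def D_word_def by (simp add: codeword_less)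
  qed (simp add: D_basis_def D_pivot_def D_word_def codeword_extra)
qed

lemma inj_on_C_pivot: "inj_on C_pivot {..<2*r + 2}"
proof (rule inj_onI)
  fix i j assume ij: "i \<in> {..<2*r + 2}" "j \<in> {..<2*r + 2}" "C_pivot i = C_pivot j"
  have "piv_pos (r - 1) k < 2*s" if "k \<in> {..<2*r + 2}" "k \<noteq> 0" for k
    using that piv_pos_less C_piv_fiber_less by simp
  then show "i = j"
    using ij inj_on_piv_pos[of "r - 1"] unfolding C_pivot_def inj_on_def
    by (cases "i = 0"; cases "j = 0") (auto, metis less_irrefl)
qed

lemma C_pivot_less: "j < 2*r + 2 \<Longrightarrow> C_pivot j < 2*s + 1"
  unfolding C_pivot_def using piv_pos_less C_piv_fiber_less by (cases "j = 0") (auto simp: less_Suc_eq)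

lemma eval_even: "eval A B (2*l) = poly A (\<alpha> l) + poly B (\<alpha> l) * \<beta> l"
  unfolding eval_def point_x_def point_y_def by simp

lemma eval_odd: "eval A B (2*l + 1) = poly A (\<alpha> l) + poly B (\<alpha> l) * (\<beta> l + 1)"
  unfolding eval_def point_x_def point_y_def by simp

lemma eval_fiber_add: "eval A B (2*l) + eval A B (2*l + 1) = poly B (\<alpha> l)"
proof -
  have "eval A B (2*l) + eval A B (2*l + 1) = 2 * (poly A (\<alpha> l) + poly B (\<alpha> l) * \<beta> l) + poly B (\<alpha> l)"
    unfolding eval_even eval_odd by (simp add: algebra_simps)
  then show ?thesis using two_eq_0 by simp
qed

lemma eval_fiber_mult:
  "eval A' B' (2*l) * eval A B (2*l) + eval A' B' (2*l + 1) * eval A B (2*l + 1)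
     = poly (A' * B + A * B' + B' * B) (\<alpha> l)"
proof -
  let ?a' = "poly A' (\<alpha> l)" and ?b' = "poly B' (\<alpha> l)" and ?a = "poly A (\<alpha> l)"
    and ?b = "poly B (\<alpha> l)" and ?u = "\<beta> l"
  have "eval A' B' (2*l) * eval A B (2*l) + eval A' B' (2*l + 1) * eval A B (2*l + 1)
      = 2 * ((?a' + ?b' * ?u) * (?a + ?b * ?u) + ?b' * ?b * ?u) + (?a' * ?b + ?a * ?b' + ?b' * ?b)"
    unfolding eval_even eval_odd by (simp add: algebra_simps)
  then show ?thesis using two_eq_0 by simp
qed

lemma eval_fiber_norm:
  assumes "l < s"
  shows "eval A B (2*l) * eval A B (2*l + 1) = poly (curve_norm A B) (\<alpha> l)"
proof -
  let ?a = "poly A (\<alpha> l)" and ?b = "poly B (\<alpha> l)" and ?u = "\<beta> l"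
  have "eval A B (2*l) * eval A B (2*l + 1) = ?a * ?a + ?a * ?b + ?b * ?b * (?u ^ 2 + ?u) + 2 * (?a * ?b * ?u)"
    unfolding eval_even eval_odd by (simp add: algebra_simps power2_eq_square)
  also have "?u ^ 2 + ?u = \<alpha> l ^ 5"
    using on_curve[OF assms] .
  finally show ?thesis
    using two_eq_0 by (simp add: curve_norm_def poly_monom)
qed

lemma degree_coeff_pairing_poly:
  assumes D: "D_degrees A' B'" and C: "C_degrees A B"
  shows "degree (A' * B + A * B' + B' * B) < s"
    and "coeff (A' * B + A * B' + B' * B) (s - 1) = coeff A' (s - r) * coeff B (r - 1)"
proof -
  have dAB: "degree (A' * B) \<le> s - 1"
    using D C degree_mult_le[of A' B] r_ge_1 r_le unfolding D_degrees_def C_degrees_def by linarith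
  have dAB': "degree (A * B') \<le> s - 2"
  proof (cases "B' = 0")
    case False
    then show ?thesis
      using D C degree_mult_le[of A B'] unfolding D_degrees_def C_degrees_def by linarith
  qed simp
  have dBB: "degree (B' * B) \<le> s - 2"
  proof (cases "B' = 0")
    case False
    then show ?thesis
      using D C degree_mult_le[of B' B] r_ge_1 unfolding D_degrees_def C_degrees_def by linarith
  qed simp
  have "degree (A' * B + A * B' + B' * B) \<le> s - 1"
    by (intro degree_add_le) (use dAB dAB' dBB in auto)
  then show "degree (A' * B + A * B' + B' * B) < s"
    using r_le by linarith
  have "s - 1 = (s - r) + (r - 1)"
    using r_ge_1 r_le by simp
  then have "coeff (A' * B) (s - 1) = coeff A' (s - r) * coeff B (r - 1)"
    using coeff_mult_degree_le[of A' "s - r" B "r - 1"] D C unfolding D_degrees_def C_degrees_def by simp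
  moreover have "coeff (A * B') (s - 1) = 0" "coeff (B' * B) (s - 1) = 0"
    using dAB' dBB r_le by (simp_all add: coeff_eq_0)
  ultimately show "coeff (A' * B + A * B' + B' * B) (s - 1) = coeff A' (s - r) * coeff B (r - 1)"
    by simp
qed

text \<open>Summing over the fibers reduces the pairing to a Lagrange sum whose only contribution
  is the product of the top coefficients, which the extra coordinates cancel.\<close>

lemma inner_prod_D_word_C_word:
  assumes D: "D_degrees A' B'" and C: "C_degrees A B"
  shows "inner_prod (2*s+1) (D_word A' B') (C_word A B) = 0"
proof -
  define P where "P = A' * B + A * B' + B' * B"
  note P = degree_coeff_pairing_poly[OF D C, folded P_def]
  have "inner_prod (2*s+1) (D_word A' B') (C_word A B)
      = (\<Sum>i<2*s. D_word A' B' i * C_word A B i) + D_word A' B' (2*s) * C_word A B (2*s)"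
    unfolding inner_prod_def by simp
  also have "(\<Sum>i<2*s. D_word A' B' i * C_word A B i)
      = (\<Sum>i<2*s. lagrange_weight \<alpha> s (i div 2) * (eval A' B' i * eval A B i))"
    by (intro sum.cong) (auto simp: D_word_def C_word_def codeword_less)
  also have "\<dots> = (\<Sum>l<s. lagrange_weight \<alpha> s l *
      (eval A' B' (2*l) * eval A B (2*l) + eval A' B' (2*l + 1) * eval A B (2*l + 1)))"
    unfolding sum_lessThan_double by (simp add: distrib_left)
  also have "\<dots> = (\<Sum>l<s. lagrange_weight \<alpha> s l * poly P (\<alpha> l))"
    unfolding P_def by (simp only: eval_fiber_mult)
  also have "\<dots> = coeff P (s - 1)"
    by (rule sum_lagrange_weight_eq_coeff[OF inj P(1)])
  also have "D_word A' B' (2*s) * C_word A B (2*s) = coeff A' (s - r) * coeff B (r - 1)"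
    by (simp add: D_word_def C_word_def codeword_extra)
  finally show ?thesis
    using P(2) two_eq_0 by simp
qed

definition lagrange_coord_weight :: "nat \<Rightarrow> 'a" where
  "lagrange_coord_weight j = (if j < 2*s then lagrange_weight \<alpha> s (j div 2) else 1)"

lemma lagrange_coord_weight_nonzero: "j < 2*s + 1 \<Longrightarrow> lagrange_coord_weight j \<noteq> 0"
  unfolding lagrange_coord_weight_def using lagrange_weight_nonzero[OF inj] by auto

lemma C_word_1_in_radical:
  "C_word 1 0 \<in> weighted_radical (2*s+1) C_code lagrange_coord_weight"
proof -
  have "weighted_inner (2*s+1) lagrange_coord_weight (C_word 1 0) (C_word A B) = 0"
    if C: "C_degrees A B" for A B
  proof -
    have "weighted_inner (2*s+1) lagrange_coord_weight (C_word 1 0) (C_word A B)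
        = (\<Sum>i<2*s. lagrange_coord_weight i * C_word 1 0 i * C_word A B i)
          + lagrange_coord_weight (2*s) * C_word 1 0 (2*s) * C_word A B (2*s)"
      unfolding weighted_inner_def by simp
    also have "lagrange_coord_weight (2*s) * C_word 1 0 (2*s) * C_word A B (2*s) = 0"
      by (simp add: C_word_def codeword_extra)
    also have "(\<Sum>i<2*s. lagrange_coord_weight i * C_word 1 0 i * C_word A B i)
        = (\<Sum>i<2*s. lagrange_weight \<alpha> s (i div 2) * eval A B i)"
      by (intro sum.cong) (auto simp: lagrange_coord_weight_def C_word_def codeword_less eval_def)
    also have "\<dots> = (\<Sum>l<s. lagrange_weight \<alpha> s l * (eval A B (2*l) + eval A B (2*l + 1)))"
      unfolding sum_lessThan_double by (simp add: distrib_left)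
    also have "\<dots> = (\<Sum>l<s. lagrange_weight \<alpha> s l * poly B (\<alpha> l))"
      by (simp only: eval_fiber_add)
    also have "\<dots> = coeff B (s - 1)"
      using C r_ge_1 r_le unfolding C_degrees_def by (intro sum_lagrange_weight_eq_coeff[OF inj]) linarith
    also have "\<dots> = 0"
      using C r_ge_1 r_le unfolding C_degrees_def by (intro coeff_eq_0) linarith
    finally show ?thesis by simp
  qed
  moreover have "C_degrees 1 0"
    unfolding C_degrees_def by simp
  ultimately show ?thesis
    unfolding weighted_radical_def C_code_def by blast
qed

lemma C_word_1_nonzero: "C_word 1 0 \<noteq> 0"
proof
  assume "C_word 1 0 = 0"
  then have "C_word 1 0 0 = 0" by simp
  moreover have "C_word 1 0 0 = 1"
    using r_le by (simp add: C_word_def codeword_less eval_def)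
  ultimately show False by simp
qed

lemma order_curve_norm_ge_2:
  assumes N: "curve_norm A B \<noteq> 0" and "eval A B (2*l) = 0" "eval A B (2*l + 1) = 0"
  shows "2 \<le> order (\<alpha> l) (curve_norm A B)"
proof -
  have B: "poly B (\<alpha> l) = 0"
    using eval_fiber_add[of A B l] assms(2,3) by simp
  then have A: "poly A (\<alpha> l) = 0"
    using assms(2) unfolding eval_even by simp
  have "[:-\<alpha> l, 1:] ^ 2 dvd curve_norm A B"
    using A B unfolding curve_norm_def power2_eq_square poly_eq_0_iff_dvd
    by (intro dvd_add mult_dvd_mono dvd_mult2)
  then show ?thesis
    using N by (simp add: order_divides)
qed

lemma card_fiber_zeros_le_order:
  assumes l: "l < s" and N: "curve_norm A B \<noteq> 0"
  shows "card {j \<in> {2*l, 2*l + 1}. eval A B j = 0} \<le> order (\<alpha> l) (curve_norm A B)"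
proof -
  let ?Z = "{j \<in> {2*l, 2*l + 1}. eval A B j = 0}"
  show ?thesis
  proof (cases "eval A B (2*l) = 0 \<and> eval A B (2*l + 1) = 0")
    case True
    have "card ?Z \<le> card {2*l, 2*l + 1}"
      by (rule card_mono) auto
    then have "card ?Z \<le> 2"
      by (simp add: card_insert_if)
    moreover have "2 \<le> order (\<alpha> l) (curve_norm A B)"
      using order_curve_norm_ge_2[OF N] True by blast
    ultimately show ?thesis
      by linarith
  next
    case False
    then have "?Z \<subseteq> {2*l} \<or> ?Z \<subseteq> {2*l + 1}"
      by auto
    then have "card ?Z \<le> 1"
      using card_mono[of "{2*l}" ?Z] card_mono[of "{2*l + 1}" ?Z] by auto
    show ?thesis
    proof (cases "?Z = {}")
      case False
      then have "eval A B (2*l) * eval A B (2*l + 1) = 0"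
        by auto
      then have "poly (curve_norm A B) (\<alpha> l) = 0"
        using eval_fiber_norm[OF l, of A B] by metis
      then have "1 \<le> order (\<alpha> l) (curve_norm A B)"
        using N order_root by (metis less_one not_less)
      with \<open>card ?Z \<le> 1\<close> show ?thesis by linarith
    next
      case True
      then have "card ?Z = 0"
        by (simp only: card.empty)
      then show ?thesis by linarith
    qed
  qed
qed

lemma card_eval_zeros_le:
  assumes nz: "A \<noteq> 0 \<or> B \<noteq> 0" and "2 * degree A \<le> M" and "B \<noteq> 0 \<Longrightarrow> 2 * degree B + 5 \<le> M"
  shows "card {j. j < 2*s \<and> eval A B j = 0} \<le> M"
proof -
  let ?N = "curve_norm A B"
  have N: "?N \<noteq> 0" "degree ?N \<le> M"
    using curve_norm_nonzero_degree_le[OF assms] by auto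
  define Z where "Z l = {j \<in> {2*l, 2*l + 1}. eval A B j = 0}" for l
  have "{j. j < 2*s \<and> eval A B j = 0} \<subseteq> (\<Union>l<s. Z l)"
  proof
    fix j assume j: "j \<in> {j. j < 2*s \<and> eval A B j = 0}"
    have "j = 2 * (j div 2) \<or> j = 2 * (j div 2) + 1"
      by presburger
    then show "j \<in> (\<Union>l<s. Z l)"
      using j unfolding Z_def by auto
  qed
  then have "card {j. j < 2*s \<and> eval A B j = 0} \<le> card (\<Union>l<s. Z l)"
    by (rule card_mono[rotated]) (simp add: Z_def)
  also have "\<dots> \<le> (\<Sum>l<s. card (Z l))"
    by (rule card_UN_le) simp
  also have "\<dots> \<le> (\<Sum>l<s. order (\<alpha> l) ?N)"
    unfolding Z_def by (rule sum_mono) (rule card_fiber_zeros_le_order[OF _ N(1)], simp)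
  also have "\<dots> = (\<Sum>x\<in>\<alpha> ` {..<s}. order x ?N)"
    by (simp add: sum.reindex[OF inj])
  also have "\<dots> = (\<Sum>x\<in>\<alpha> ` {..<s} \<inter> {x. poly ?N x = 0}. order x ?N)"
    by (rule sum.mono_neutral_right) (use N(1) order_gt_0_iff in auto)
  also have "\<dots> \<le> (\<Sum>x | poly ?N x = 0. order x ?N)"
    by (rule sum_mono2[OF poly_roots_finite[OF N(1)]]) auto
  also have "\<dots> \<le> degree ?N"
    by (rule sum_order_le_degree[OF N(1)])
  finally show ?thesis
    using N(2) by simp
qed

lemma hweight_codeword:
  assumes "\<And>l. l < s \<Longrightarrow> w l \<noteq> 0"
  shows "hweight (2*s+1) (codeword w e A B)
    = (2*s - card {j. j < 2*s \<and> eval A B j = 0}) + (if e = 0 then 0 else 1)"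
proof -
  have "{i. i < 2*s+1 \<and> codeword w e A B i \<noteq> 0}
      = ({..<2*s} - {j. j < 2*s \<and> eval A B j = 0}) \<union> (if e = 0 then {} else {2*s})"
    unfolding codeword_def using assms by (auto simp: less_Suc_eq)
  moreover have "card ({..<2*s} - {j. j < 2*s \<and> eval A B j = 0})
      = 2*s - card {j. j < 2*s \<and> eval A B j = 0}"
    by (subst card_Diff_subset) auto
  ultimately show ?thesis
    unfolding hweight_def by (simp add: card_insert_if)
qed

lemma hweight_C_word:
  assumes C: "C_degrees A B" and nz: "C_word A B \<noteq> 0"
  shows "2*(s - r - 1) \<le> hweight (2*s+1) (C_word A B)"
proof -
  have AB: "A \<noteq> 0 \<or> B \<noteq> 0"
    using nz C_word_0 by auto
  have hw: "hweight (2*s+1) (C_word A B)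
      = (2*s - card {j. j < 2*s \<and> eval A B j = 0}) + (if coeff B (r - 1) = 0 then 0 else 1)"
    unfolding C_word_def by (rule hweight_codeword) simp
  show ?thesis
  proof (cases "coeff B (r - 1) = 0")
    case False
    have "card {j. j < 2*s \<and> eval A B j = 0} \<le> 2*r + 3"
      by (rule card_eval_zeros_le[OF AB]) (use C r_ge_1 in \<open>auto simp: C_degrees_def\<close>)
    then show ?thesis using hw False r_le by simp
  next
    case True
    have "B \<noteq> 0 \<Longrightarrow> degree B \<noteq> r - 1"
      using True by (metis leading_coeff_0_iff)
    then have "card {j. j < 2*s \<and> eval A B j = 0} \<le> 2*r + 2"
      by (intro card_eval_zeros_le[OF AB]) (use C r_ge_1 in \<open>auto simp: C_degrees_def\<close>)
    then show ?thesis using hw True r_le by simp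
  qed
qed

lemma hweight_D_word:
  assumes D: "D_degrees A B" and nz: "D_word A B \<noteq> 0"
  shows "2*r + 1 \<le> hweight (2*s+1) (D_word A B)"
proof -
  have AB: "A \<noteq> 0 \<or> B \<noteq> 0"
    using nz D_word_0 by auto
  have hw: "hweight (2*s+1) (D_word A B)
      = (2*s - card {j. j < 2*s \<and> eval A B j = 0}) + (if coeff A (s - r) = 0 then 0 else 1)"
    unfolding D_word_def by (rule hweight_codeword) (rule lagrange_weight_nonzero[OF inj])
  show ?thesis
  proof (cases "coeff A (s - r) = 0")
    case False
    have "card {j. j < 2*s \<and> eval A B j = 0} \<le> 2*(s - r)"
      by (rule card_eval_zeros_le[OF AB]) (use D r_le in \<open>auto simp: D_degrees_def\<close>)
    then show ?thesis using hw False r_le by simp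
  next
    case True
    have "A \<noteq> 0 \<Longrightarrow> degree A \<noteq> s - r"
      using True by (metis leading_coeff_0_iff)
    then have "2 * degree A \<le> 2*s - 2*r - 1"
      using D r_le unfolding D_degrees_def by (cases "A = 0") auto
    then have "card {j. j < 2*s \<and> eval A B j = 0} \<le> 2*s - 2*r - 1"
      by (intro card_eval_zeros_le[OF AB]) (use D r_le in \<open>auto simp: D_degrees_def\<close>)
    then show ?thesis using hw True r_le by simp
  qed
qed

lemma C_pivots:
  "2*s \<in> C_pivot ` {..<2*r + 2}"
  "c < 2*(r - 1) \<Longrightarrow> c \<in> C_pivot ` {..<2*r + 2}"
  "l \<le> r + 1 \<Longrightarrow> 2*l \<in> C_pivot ` {..<2*r + 2}"
proof -
  show "2*s \<in> C_pivot ` {..<2*r + 2}"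
    using imageI[of 0 "{..<2*r + 2}" C_pivot] by (simp add: C_pivot_def)
  show low: "c \<in> C_pivot ` {..<2*r + 2}" if "c < 2*(r - 1)" for c
  proof -
    have "C_pivot (c + 1) = c"
      unfolding C_pivot_def piv_pos_def using that by simp
    then show ?thesis
      using that imageI[of "c + 1" "{..<2*r + 2}" C_pivot] by simp
  qed
  show "2*l \<in> C_pivot ` {..<2*r + 2}" if "l \<le> r + 1"
  proof (cases "l + 2 \<le> r")
    case True
    then show ?thesis by (intro low) simp
  next
    case False
    then have "C_pivot (l + r) = 2*l"
      unfolding C_pivot_def piv_pos_def using r_ge_1 by auto
    then show ?thesis
      using that imageI[of "l + r" "{..<2*r + 2}" C_pivot] by simp
  qed
qed

lemma poly_eq_0_if_vanishes_on_nodes: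
  assumes "degree p < n" "n \<le> s" "\<And>l. l < n \<Longrightarrow> poly p (\<alpha> l) = 0"
  shows "p = 0"
proof (rule poly_eq_0_if_roots[of "\<alpha> ` {..<n}"])
  have "inj_on \<alpha> {..<n}"
    by (rule inj_on_subset[OF inj]) (use assms(2) in auto)
  then show "degree p < card (\<alpha> ` {..<n})"
    using assms(1) by (simp add: card_image)
qed (use assms(3) in auto)

text \<open>The pivot coordinates form an information set of the code: they contain both points of
  the first \<open>r - 1\<close> fibers, which kills \<open>B\<close>, and then \<open>r + 2\<close> points on distinct fibers,
  which kills \<open>A\<close>.\<close>

lemma C_code_eq_0_if_vanishes_on_pivots:
  assumes v: "v \<in> C_code" and vanish: "\<And>i. i \<in> C_pivot ` {..<2*r + 2} \<Longrightarrow> v i = 0"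
  shows "v = 0"
proof -
  obtain A B where v_def: "v = C_word A B" and C: "C_degrees A B"
    using v unfolding C_code_def by blast
  have "coeff B (r - 1) = 0"
    using vanish[OF C_pivots(1)] by (simp add: v_def C_word_def codeword_extra)
  then have "B = 0 \<or> degree B < r - 1"
    using C unfolding C_degrees_def by (metis le_neq_implies_less leading_coeff_0_iff)
  moreover have "poly B (\<alpha> l) = 0" if "l < r - 1" for l
  proof -
    have "v (2*l) = 0" "v (2*l + 1) = 0" "2*l + 1 < 2*s"
      using that vanish C_pivots(2) r_le by auto
    then have "eval A B (2*l) = 0" "eval A B (2*l + 1) = 0"
      by (simp_all add: v_def C_word_def codeword_less)
    then show ?thesis
      using eval_fiber_add[of A B l] by simp
  qed
  ultimately have B: "B = 0"
    using poly_eq_0_if_vanishes_on_nodes[of B "r - 1"] r_le by auto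
  have "poly A (\<alpha> l) = 0" if "l < r + 2" for l
  proof -
    have "v (2*l) = 0" "2*l < 2*s"
      using that vanish C_pivots(3) r_le by auto
    then show ?thesis
      using B by (simp add: v_def C_word_def codeword_less eval_even)
  qed
  then have "A = 0"
    using poly_eq_0_if_vanishes_on_nodes[of A "r + 2"] C r_le unfolding C_degrees_def by simp
  with B v_def C_word_0 show ?thesis
    by simp
qed

lemma dim_C_code: "fvec.dim C_code = 2*r + 2"
proof (rule antisym)
  have "fvec.dim C_code \<le> card (C_pivot ` {..<2*r + 2})"
    by (rule dim_le_card_determining_coordinates[OF subspace_C_code])
      (use C_code_eq_0_if_vanishes_on_pivots in auto)
  also have "\<dots> \<le> 2*r + 2"
    using card_image_le[of "{..<2*r + 2}" C_pivot] by simp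
  finally show "fvec.dim C_code \<le> 2*r + 2" .
next
  have "card (C_basis ` {..<2*r + 2}) \<le> fvec.dim C_code"
    using independent_card_le_dim_ambient[OF triangular_family.independent_family[OF C_triangular] _
        C_code_subset_ambient] C_basis_mem by blast
  then show "2*r + 2 \<le> fvec.dim C_code"
    using triangular_family.card_family[OF C_triangular] by simp
qed

lemma D_code_subset_dual: "D_code \<subseteq> dual_code (2*s+1) C_code"
proof
  fix v assume "v \<in> D_code"
  then obtain A' B' where v: "v = D_word A' B'" "D_degrees A' B'"
    unfolding D_code_def by blast
  then have "inner_prod (2*s+1) v c = 0" if "c \<in> C_code" for c
    using that inner_prod_D_word_C_word unfolding C_code_def by auto
  moreover have "v \<in> ambient (2*s+1)"
    using v D_code_subset_ambient \<open>v \<in> D_code\<close> by blast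
  ultimately show "v \<in> dual_code (2*s+1) C_code"
    unfolding dual_code_def by auto
qed

text \<open>A dual codeword vanishing off the pivots of \<open>C_code\<close> is orthogonal to the triangular
  basis, hence zero.\<close>

lemma dim_dual_C_code_le: "fvec.dim (dual_code (2*s+1) C_code) \<le> 2*s - 2*r - 1"
proof -
  let ?P = "C_pivot ` {..<2*r + 2}"
  let ?K = "{..<2*s+1} - ?P"
  have P: "?P \<subseteq> {..<2*s+1}" "card ?P = 2*r + 2"
    using C_pivot_less card_image[OF inj_on_C_pivot] by auto
  have "fvec.dim (dual_code (2*s+1) C_code) \<le> card ?K"
  proof (rule dim_le_card_determining_coordinates[OF dual_code_subspace])
    fix v assume v: "v \<in> dual_code (2*s+1) C_code" and vK: "\<forall>i\<in>?K. v i = 0"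
    show "v = 0"
    proof (rule triangular_family.orthogonal_family_eq_0[OF C_triangular inj_on_C_pivot P(1)])
      fix i assume "i \<notin> ?P"
      then show "v i = 0"
        using vK v unfolding dual_code_def ambient_def by (cases "i < 2*s+1") auto
    next
      fix j assume "j < 2*r + 2"
      then have "C_basis j \<in> C_code"
        by (rule C_basis_mem)
      then show "(\<Sum>i<2*s+1. v i * C_basis j i) = 0"
        using v unfolding dual_code_def inner_prod_def by auto
    qed
  qed simp
  also have "card ?K = 2*s - 2*r - 1"
    using P r_le by (simp add: card_Diff_subset)
  finally show ?thesis .
qed

lemma dim_dual_C_code: "fvec.dim (dual_code (2*s+1) C_code) = 2*s - 2*r - 1"
proof (rule antisym[OF dim_dual_C_code_le])
  have "card (D_basis ` {..<2*s - 2*r - 1}) \<le> fvec.dim (dual_code (2*s+1) C_code)"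
    using independent_card_le_dim_ambient[OF triangular_family.independent_family[OF D_triangular] _
        dual_code_subset_ambient] D_basis_mem D_code_subset_dual by blast
  then show "2*s - 2*r - 1 \<le> fvec.dim (dual_code (2*s+1) C_code)"
    using triangular_family.card_family[OF D_triangular] by simp
qed

lemma dual_C_code_subset: "dual_code (2*s+1) C_code \<subseteq> D_code"
proof
  fix v assume v: "v \<in> dual_code (2*s+1) C_code"
  let ?S = "D_basis ` {..<2*s - 2*r - 1}"
  have ind: "fvec.independent ?S"
    by (rule triangular_family.independent_family[OF D_triangular])
  have card: "card ?S = 2*s - 2*r - 1"
    by (rule triangular_family.card_family[OF D_triangular])
  have SD: "?S \<subseteq> D_code"
    by (rule image_subsetI) (rule D_basis_mem, simp)
  have "v \<in> fvec.span ?S"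
  proof (rule ccontr)
    assume nv: "v \<notin> fvec.span ?S"
    have "v \<notin> ?S"
    proof
      assume "v \<in> ?S"
      then have "v \<in> fvec.span ?S"
        by (rule fvec.span_base)
      with nv show False by simp
    qed
    then have card_insert: "card (insert v ?S) = 2*s - 2*r"
      using card r_le by simp
    have "insert v ?S \<subseteq> dual_code (2*s+1) C_code"
      using v SD D_code_subset_dual by blast
    then have "card (insert v ?S) \<le> fvec.dim (dual_code (2*s+1) C_code)"
      by (rule independent_card_le_dim_ambient[OF fvec.independent_insertI[OF nv ind] _
            dual_code_subset_ambient])
    then show False
      using card_insert dim_dual_C_code r_le by linarith
  qed
  moreover have "fvec.span ?S \<subseteq> D_code"
    by (rule fvec.span_minimal[OF SD subspace_D_code])
  ultimately show "v \<in> D_code" by blast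
qed

lemma code_params_C_code: "code_params C_code (2*s+1) (2*(r+1)) (2*(s-r-1))"
  unfolding code_params_def linear_code_def min_dist_ge_def
  using C_code_subset_ambient subspace_C_code dim_C_code hweight_C_word
  unfolding C_code_def by auto

lemma code_params_dual_C_code:
  "code_params (dual_code (2*s+1) C_code) (2*s+1) (2*(s-r)-1) (2*r+1)"
  unfolding code_params_def linear_code_def min_dist_ge_def
  using dual_code_subset_ambient dual_code_subspace dim_dual_C_code
    hweight_D_word dual_C_code_subset
  unfolding D_code_def by auto

definition pivot_indicator :: "nat \<Rightarrow> 'a" where
  "pivot_indicator i = (if i \<in> C_pivot ` {..<2*r + 2} then 1 else 0)"

lemma weighted_radical_pivot_indicator:
  "weighted_radical (2*s+1) C_code pivot_indicator = {0}"
proof (intro set_eqI iffI)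
  fix x assume x: "x \<in> weighted_radical (2*s+1) C_code pivot_indicator"
  define v where "v i = (if i \<in> C_pivot ` {..<2*r + 2} then x i else 0)" for i
  have "v = 0"
  proof (rule triangular_family.orthogonal_family_eq_0[OF C_triangular inj_on_C_pivot])
    show "C_pivot ` {..<2*r + 2} \<subseteq> {..<2*s+1}"
      using C_pivot_less by auto
    fix i assume "i \<notin> C_pivot ` {..<2*r + 2}"
    then show "v i = 0"
      unfolding v_def by simp
  next
    fix j assume "j < 2*r + 2"
    then have "weighted_inner (2*s+1) pivot_indicator x (C_basis j) = 0"
      using x C_basis_mem unfolding weighted_radical_def by blast
    moreover have "weighted_inner (2*s+1) pivot_indicator x (C_basis j) = (\<Sum>i<2*s+1. v i * C_basis j i)"
      unfolding weighted_inner_def v_def pivot_indicator_def by (intro sum.cong) auto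
    ultimately show "(\<Sum>i<2*s+1. v i * C_basis j i) = 0"
      by simp
  qed
  then have "x i = 0" if "i \<in> C_pivot ` {..<2*r + 2}" for i
    using that fun_cong[of v 0 i] unfolding v_def by simp
  then show "x \<in> {0}"
    using C_code_eq_0_if_vanishes_on_pivots x weighted_radical_subset by blast
next
  fix x :: "nat \<Rightarrow> 'a" assume "x \<in> {0}"
  then show "x \<in> weighted_radical (2*s+1) C_code pivot_indicator"
    using subspace_weighted_radical[OF subspace_C_code] fvec.subspace_0 by auto
qed

theorem exists_hull_dim_1_code:
  assumes squares: "\<And>y::'a. \<exists>x. x * x = y" and three: "\<exists>a b::'a. a \<noteq> 0 \<and> b \<noteq> 0 \<and> a \<noteq> b"
  shows "\<exists>C :: (nat \<Rightarrow> 'a) set.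
           code_params C (2*s+1) (2*(r+1)) (2*(s-r-1))
         \<and> fvec.dim (code_hull (2*s+1) C) = 1
         \<and> code_params (dual_code (2*s+1) C) (2*s+1) (2*(s-r)-1) (2*r+1)"
proof -
  obtain c where c: "\<forall>i. c i \<noteq> 0" "fvec.dim (code_hull (2*s+1) (coord_scale c ` C_code)) = 1"
    using exists_coord_scale_code_hull_dim_1[OF subspace_C_code C_code_subset_ambient squares three
        weighted_radical_pivot_indicator _ C_word_1_in_radical C_word_1_nonzero]
      lagrange_coord_weight_nonzero by blast
  have "inverse (c i) \<noteq> 0" for i
    using c(1) by simp
  then have "code_params (dual_code (2*s+1) (coord_scale c ` C_code)) (2*s+1) (2*(s-r)-1) (2*r+1)"
    using code_params_coord_scale[OF _ code_params_dual_C_code] dual_code_coord_scale[of c] c(1)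
    by simp
  then show ?thesis
    using code_params_coord_scale[OF _ code_params_C_code] c by blast
qed

end

theorem mainTheorem13:
  fixes m s r :: nat
  assumes "card (UNIV :: 'a::{finite,field} set) = 2 ^ m"
    and "m \<ge> 3"
    and "1 \<le> s" and "s \<le> card {\<alpha>::'a. abs_trace m (\<alpha> ^ 5) = 0}"
    and "1 \<le> r" and "r + 2 \<le> s"
  shows "\<exists>C :: (nat \<Rightarrow> 'a) set.
           code_params C (2*s+1) (2*(r+1)) (2*(s-r-1))
         \<and> fvec.dim (code_hull (2*s+1) C) = 1
         \<and> code_params (dual_code (2*s+1) C) (2*s+1) (2*(s-r)-1) (2*r+1)"
proof -
  have m: "m \<ge> 1" "m \<ge> 2"
    using assms(2) by simp_all
  obtain \<alpha> \<beta> :: "nat \<Rightarrow> 'a" where "inj_on \<alpha> {..<s}" "\<And>l. l < s \<Longrightarrow> \<beta> l ^ 2 + \<beta> l = \<alpha> l ^ 5"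
    using exists_points_on_curve[OF assms(1) m(1) assms(4)] by blast
  then interpret curve_code \<alpha> \<beta> s r
    using CHAR_eq_2[OF assms(1) m(1)] assms(5,6) by unfold_locales
  show ?thesis
    by (rule exists_hull_dim_1_code[OF surj_square_CHAR_2[OF CHAR_eq_2[OF assms(1) m(1)]]
          exists_two_distinct_nonzero[OF assms(1) m]])
qed

end
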